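(* Let $\{f_j^\lambda\}$ be a parametrized IFS satisfying (MA1)–(MA4) and (MT) on $U\subset\mathbb R^d$. For every $\lambda_0\in U$ and $\beta>0$ there exist $c_\beta>0$ and an open ball $J=B(\lambda_0,\varepsilon_0)$ with the following property: for every $\omega,\tau\in\Sigma$ there exists a unit vector $e\in\mathbb R^d$ such that for every $p\in B(0,\varepsilon_0)\cap\mathrm{span}(e)^\perp$ and all $t\in J_p=\{t\in\mathbb R:p+te\in B(0,\varepsilon_0)\}$, $$|\Pi^{\lambda_0+p+te}(\omega)-\Pi^{\lambda_0+p+te}(\tau)|<c_\beta d_{\lambda_0}(\omega,\tau)^{1+\beta}\implies\Big|\tfrac d{dt}\big(\Pi^{\lambda_0+p+te}(\omega)-\Pi^{\lambda_0+p+te}(\tau)\big)\Big|\ge c_\beta d_{\lambda_0}(\omega,\tau)^{1+\beta}.$$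
   Context: Setup: $X\subset\mathbb R$ compact interval, $\mathcal A=\{1,\dots,m\}$, $\Sigma=\mathcal A^{\mathbb N}$, $\mathbf i\wedge\mathbf j$ longest common prefix, $f^\lambda_\omega$ compositions, $\Pi^\lambda(\mathbf i)=\lim_nf^\lambda_{\mathbf i|_n}(x)$, $d_\lambda(\mathbf i,\mathbf j)=|f^\lambda_{\mathbf i\wedge\mathbf j}(X)|$ (and $0$ if $\mathbf i=\mathbf j$). $U\subset\mathbb R^d$ bounded open. (MA1)–(MA4), $\delta\in(0,1)$: $f^\lambda_j$ is $C^{2+\delta}$ in $x$, $C^{1+\delta}$ in $\lambda$, with continuous mixed partials, these derivatives uniformly bounded and uniformly $\delta$-Hölder in $x$ and $\lambda$; $0<\gamma_1\le|\frac d{dx}f^\lambda_j|\le\gamma_2<1$. (MT): $\exists\eta>0$ $\forall\lambda\in\overline U$, $\mathbf i,\mathbf j$ with $i_1\ne j_1$: $|\Pi^\lambda(\mathbf i)-\Pi^\lambda(\mathbf j)|<\eta\Rightarrow|\nabla_\lambda(\Pi^\lambda(\mathbf i)-\Pi^\lambda(\mathbf j))|\ge\eta$. *)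

theory Defs
  imports "HOL-Analysis.Analysis"
begin

text \<open>Symbolic space: infinite words over the alphabet {1..m}, indexed from 0
  (so the paper's i_1 is \<omega> 0).\<close>
definition seqs :: "nat \<Rightarrow> (nat \<Rightarrow> nat) set" where
  "seqs m = {\<omega>. \<forall>n. \<omega> n \<in> {1..m}}"

definition fcomp :: "(nat \<Rightarrow> 'a \<Rightarrow> real \<Rightarrow> real) \<Rightarrow> 'a \<Rightarrow> nat list \<Rightarrow> real \<Rightarrow> real" where
  "fcomp f l ws = foldr (\<lambda>j g. f j l \<circ> g) ws id"

definition pref :: "(nat \<Rightarrow> nat) \<Rightarrow> nat \<Rightarrow> nat list" where
  "pref \<omega> n = map \<omega> [0..<n]"

definition proj :: "(nat \<Rightarrow> 'a \<Rightarrow> real \<Rightarrow> real) \<Rightarrow> real \<Rightarrow> 'a \<Rightarrow> (nat \<Rightarrow> nat) \<Rightarrow> real" where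
  "proj f x l \<omega> = lim (\<lambda>n. fcomp f l (pref \<omega> n) x)"

definition common :: "(nat \<Rightarrow> nat) \<Rightarrow> (nat \<Rightarrow> nat) \<Rightarrow> nat list" where
  "common \<omega> \<tau> = pref \<omega> (LEAST n. \<omega> n \<noteq> \<tau> n)"

definition dsym :: "(nat \<Rightarrow> 'a \<Rightarrow> real \<Rightarrow> real) \<Rightarrow> real set \<Rightarrow> 'a \<Rightarrow> (nat \<Rightarrow> nat) \<Rightarrow> (nat \<Rightarrow> nat) \<Rightarrow> real" where
  "dsym f X l \<omega> \<tau> = (if \<omega> = \<tau> then 0 else diameter (fcomp f l (common \<omega> \<tau>) ` X))"

definition MA :: "(nat \<Rightarrow> 'a::euclidean_space \<Rightarrow> real \<Rightarrow> real) \<Rightarrow> nat \<Rightarrow> real set \<Rightarrow> 'a set \<Rightarrow> real \<Rightarrow> bool" where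
  "MA f m X U \<delta> \<longleftrightarrow>
    (\<exists>fx fxx (fl :: nat \<Rightarrow> 'a \<Rightarrow> real \<Rightarrow> 'a) flx M \<gamma>1 \<gamma>2.
       0 < \<gamma>1 \<and> \<gamma>1 \<le> \<gamma>2 \<and> \<gamma>2 < 1 \<and>
       (\<forall>j\<in>{1..m}. \<forall>l\<in>closure U. f j l ` X \<subseteq> X \<and>
          (\<forall>x\<in>X.
             (f j l has_real_derivative fx j l x) (at x within X) \<and>
             (fx j l has_real_derivative fxx j l x) (at x within X) \<and>
             ((\<lambda>\<mu>. f j \<mu> x) has_derivative (\<lambda>h. fl j l x \<bullet> h)) (at l within closure U) \<and>
             ((\<lambda>y. fl j l y) has_vector_derivative flx j l x) (at x within X) \<and>
             ((\<lambda>\<mu>. fx j \<mu> x) has_derivative (\<lambda>h. flx j l x \<bullet> h)) (at l within closure U) \<and>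
             \<gamma>1 \<le> \<bar>fx j l x\<bar> \<and> \<bar>fx j l x\<bar> \<le> \<gamma>2 \<and>
             \<bar>fxx j l x\<bar> \<le> M \<and> norm (fl j l x) \<le> M \<and> norm (flx j l x) \<le> M)) \<and>
       (\<forall>j\<in>{1..m}. continuous_on (closure U \<times> X) (\<lambda>(l, x). flx j l x)) \<and>
       (\<forall>j\<in>{1..m}. \<forall>l\<in>closure U. \<forall>\<mu>\<in>closure U. \<forall>x\<in>X. \<forall>y\<in>X.
          \<bar>fx j l x - fx j l y\<bar> \<le> M * \<bar>x - y\<bar> powr \<delta> \<and>
          \<bar>fx j l x - fx j \<mu> x\<bar> \<le> M * norm (l - \<mu>) powr \<delta> \<and>
          \<bar>fxx j l x - fxx j l y\<bar> \<le> M * \<bar>x - y\<bar> powr \<delta> \<and>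
          \<bar>fxx j l x - fxx j \<mu> x\<bar> \<le> M * norm (l - \<mu>) powr \<delta> \<and>
          norm (fl j l x - fl j l y) \<le> M * \<bar>x - y\<bar> powr \<delta> \<and>
          norm (fl j l x - fl j \<mu> x) \<le> M * norm (l - \<mu>) powr \<delta> \<and>
          norm (flx j l x - flx j l y) \<le> M * \<bar>x - y\<bar> powr \<delta> \<and>
          norm (flx j l x - flx j \<mu> x) \<le> M * norm (l - \<mu>) powr \<delta>))"

text \<open>Transversality condition (MT); Pi is computed with base point x0 \<in> X.\<close>
definition MT :: "(nat \<Rightarrow> 'a::euclidean_space \<Rightarrow> real \<Rightarrow> real) \<Rightarrow> nat \<Rightarrow> real \<Rightarrow> 'a set \<Rightarrow> bool" where
  "MT f m x0 U \<longleftrightarrow>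
    (\<exists>\<eta>>0. \<forall>l\<in>closure U. \<forall>\<omega>\<in>seqs m. \<forall>\<tau>\<in>seqs m.
       \<omega> 0 \<noteq> \<tau> 0 \<and> \<bar>proj f x0 l \<omega> - proj f x0 l \<tau>\<bar> < \<eta> \<longrightarrow>
       (\<exists>g. ((\<lambda>\<mu>. proj f x0 \<mu> \<omega> - proj f x0 \<mu> \<tau>) has_derivative (\<lambda>h. g \<bullet> h)) (at l within closure U)
            \<and> \<eta> \<le> norm g))"

end

theory Submission
  imports Defs
begin

text \<open>
  Write \<open>w = \<omega> \<and> \<tau>\<close>, \<open>k = |w|\<close> and \<open>d = d\<^sub>\<lambda>\<^sub>0(\<omega>, \<tau>)\<close>. Unfolding the common prefix,
  \<open>\<Pi>\<^sup>\<lambda>(\<omega>) - \<Pi>\<^sup>\<lambda>(\<tau>) = f\<^sup>\<lambda>\<^sub>w(\<Pi>\<^sup>\<lambda>(\<sigma>\<^sup>k\<omega>)) - f\<^sup>\<lambda>\<^sub>w(\<Pi>\<^sup>\<lambda>(\<sigma>\<^sup>k\<tau>))\<close>, and by bounded distortion \<open>f\<^sup>\<lambda>\<^sub>w\<close> is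
  almost affine with derivative comparable to \<open>d\<close>, uniformly for \<open>\<lambda>\<close> near \<open>\<lambda>\<^sub>0\<close>; moving \<open>\<lambda>\<close>
  costs a factor \<open>(1 + O(\<epsilon>\<^sup>\<delta>))\<^sup>k\<close>, which is paid for by \<open>d\<^sup>\<beta>\<^sup>/\<^sup>2 \<le> C \<gamma>\<^sub>2\<^sup>k\<^sup>\<beta>\<^sup>/\<^sup>2\<close>. Hence if the
  projections are \<open>c d\<^sup>1\<^sup>+\<^sup>\<beta>\<close>-close somewhere in the ball, the tails \<open>\<sigma>\<^sup>k\<omega>, \<sigma>\<^sup>k\<tau>\<close> (whose first
  letters differ) project \<open>\<eta>\<close>-close, so by (MT) the \<open>\<lambda>\<close>-gradient \<open>H\<close> of their difference has norm
  at least \<open>\<eta>\<close> there. The gradient of \<open>\<Pi>\<^sup>\<lambda>(\<omega>) - \<Pi>\<^sup>\<lambda>(\<tau>)\<close> is \<open>(f\<^sup>\<lambda>\<^sub>w)' H\<close> up to errors of the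
  order of the tail gap, and \<open>H\<close> is Hoelder in \<open>\<lambda>\<close>; so the direction \<open>e\<close> of \<open>H\<close> at one point
  works on the whole ball, with derivative at least \<open>(\<eta>/2) |(f\<^sup>\<lambda>\<^sub>w)'| \<ge> c d\<^sup>1\<^sup>+\<^sup>\<beta>\<close>.
  The \<open>\<lambda>\<close>-gradient of \<open>\<Pi>\<close> is built as the bounded solution of its chain-rule recursion
  along the shift, and all its estimates come from one contraction argument.
\<close>

lemma contraction_bound:
  fixes \<phi> :: "'b \<Rightarrow> real"
  assumes cl: "\<And>x. x\<in>P \<Longrightarrow> sh x \<in> P" and bd: "\<And>x. x\<in>P \<Longrightarrow> \<phi> x \<le> B"
    and rec: "\<And>x. x\<in>P \<Longrightarrow> \<phi> x \<le> A + q * \<phi> (sh x)"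
    and q: "0 \<le> q" "q < 1" and A: "0 \<le> A" and x: "x \<in> P"
  shows "\<phi> x \<le> A / (1 - q)"
proof -
  have gs: "(\<Sum>i<n. q^i) \<le> 1/(1-q)" for n
    using q by (simp add: sum_gp_strict divide_right_mono)
  have ind: "\<forall>x\<in>P. \<phi> x \<le> A * (\<Sum>i<n. q^i) + q^n * B" for n
  proof (induction n)
    case 0 then show ?case using bd by simp
  next
    case (Suc n)
    show ?case
    proof
      fix x assume x: "x \<in> P"
      have "\<phi> x \<le> A + q * \<phi> (sh x)" using rec x .
      also have "\<dots> \<le> A + q * (A * (\<Sum>i<n. q^i) + q^n * B)"
        using Suc cl[OF x] q by (intro add_left_mono mult_left_mono) auto
      also have "\<dots> = A * (\<Sum>i<Suc n. q^i) + q^Suc n * B"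
        unfolding sum.lessThan_Suc_shift by (simp add: sum_distrib_left algebra_simps)
      finally show "\<phi> x \<le> A * (\<Sum>i<Suc n. q^i) + q^Suc n * B" .
    qed
  qed
  have le: "\<phi> x \<le> A/(1-q) + q^n * B" for n
  proof -
    have "A * (\<Sum>i<n. q^i) \<le> A * (1/(1-q))" using gs[of n] A by (rule mult_left_mono)
    then show ?thesis using ind[of n] x by auto
  qed
  have "(\<lambda>n. A/(1-q) + q^n * B) \<longlonglongrightarrow> A/(1-q) + 0 * B"
    using q by (intro tendsto_intros) auto
  then have "(\<lambda>n. A/(1-q) + q^n * B) \<longlonglongrightarrow> A/(1-q)" by simp
  then show ?thesis
    by (rule LIMSEQ_le_const) (use le in auto)
qed

definition cocycle_sum :: "('b \<Rightarrow> 'b) \<Rightarrow> ('b \<Rightarrow> 'c::banach) \<Rightarrow> ('b \<Rightarrow> real) \<Rightarrow> 'b \<Rightarrow> 'c" where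
  "cocycle_sum sh \<alpha> \<beta> x = (\<Sum>n. (\<Prod>i<n. \<beta> ((sh^^i) x)) *\<^sub>R \<alpha> ((sh^^n) x))"

lemma
  fixes \<alpha> :: "'b \<Rightarrow> 'c::banach"
  assumes cl: "\<And>x. x\<in>P \<Longrightarrow> sh x \<in> P" and a: "\<And>x. x\<in>P \<Longrightarrow> norm (\<alpha> x) \<le> K"
    and b: "\<And>x. x\<in>P \<Longrightarrow> \<bar>\<beta> x\<bar> \<le> q" and q: "0 \<le> q" "q < 1" and x: "x \<in> P"
  shows cocycle_sum_unfold: "cocycle_sum sh \<alpha> \<beta> x = \<alpha> x + \<beta> x *\<^sub>R cocycle_sum sh \<alpha> \<beta> (sh x)"
    and norm_cocycle_sum_le: "norm (cocycle_sum sh \<alpha> \<beta> x) \<le> K / (1 - q)"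
proof -
  have pw: "(sh^^n) y \<in> P" if "y \<in> P" for n y
    using that by (induction n) (auto intro: cl)
  have tb: "norm ((\<Prod>i<n. \<beta> ((sh^^i) y)) *\<^sub>R \<alpha> ((sh^^n) y)) \<le> K * q^n" if "y\<in>P" for n y
  proof -
    have "\<bar>\<Prod>i<n. \<beta> ((sh^^i) y)\<bar> \<le> q^n"
      unfolding abs_prod using prod_mono[of "{..<n}" "\<lambda>i. \<bar>\<beta> ((sh^^i) y)\<bar>" "\<lambda>_. q"] b pw[OF that]
      by simp
    moreover have "norm (\<alpha> ((sh^^n) y)) \<le> K" using a pw[OF that] .
    ultimately show ?thesis
      by (simp add: mult.commute mult_mono')
  qed
  have sg: "summable (\<lambda>n. K * q^n)" using q by (simp add: summable_geometric)
  have sm: "summable (\<lambda>n. (\<Prod>i<n. \<beta> ((sh^^i) y)) *\<^sub>R \<alpha> ((sh^^n) y))" if "y\<in>P" for y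
    by (rule summable_comparison_test'[OF sg]) (use tb[OF that] in auto)
  have smn: "summable (\<lambda>n. norm ((\<Prod>i<n. \<beta> ((sh^^i) y)) *\<^sub>R \<alpha> ((sh^^n) y)))" if "y\<in>P" for y
    by (rule summable_comparison_test'[OF sg]) (use tb[OF that] in auto)
  have "(\<Sum>n. (\<Prod>i<Suc n. \<beta> ((sh^^i) x)) *\<^sub>R \<alpha> ((sh^^Suc n) x))
      = (\<Sum>n. \<beta> x *\<^sub>R ((\<Prod>i<n. \<beta> ((sh^^i) (sh x))) *\<^sub>R \<alpha> ((sh^^n) (sh x))))"
    unfolding prod.lessThan_Suc_shift by (simp add: funpow_Suc_right del: funpow.simps)
  also have "\<dots> = \<beta> x *\<^sub>R cocycle_sum sh \<alpha> \<beta> (sh x)"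
    unfolding cocycle_sum_def using sm[OF cl[OF x]] by (rule suminf_scaleR_right[symmetric])
  finally show "cocycle_sum sh \<alpha> \<beta> x = \<alpha> x + \<beta> x *\<^sub>R cocycle_sum sh \<alpha> \<beta> (sh x)"
    using suminf_split_head[OF sm[OF x]] unfolding cocycle_sum_def by simp
  have "norm (cocycle_sum sh \<alpha> \<beta> x) \<le> (\<Sum>n. norm ((\<Prod>i<n. \<beta> ((sh^^i) x)) *\<^sub>R \<alpha> ((sh^^n) x)))"
    unfolding cocycle_sum_def by (rule summable_norm[OF smn[OF x]])
  also have "\<dots> \<le> (\<Sum>n. K * q^n)"
    by (rule suminf_le[OF _ smn[OF x] sg]) (use tb[OF x] in auto)
  also have "\<dots> = K / (1 - q)" using q by (simp add: suminf_mult suminf_geometric summable_geometric divide_simps)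
  finally show "norm (cocycle_sum sh \<alpha> \<beta> x) \<le> K / (1 - q)" .
qed

lemma mult_power_le_geometric:
  fixes q :: real assumes "0 \<le> q" "q < 1"
  shows "real k * q ^ k \<le> 1 / (1 - q)"
proof -
  have "real k * q ^ k = (\<Sum>i<k. q ^ k)" by simp
  also have "\<dots> \<le> (\<Sum>i<k. q ^ i)" using assms by (intro sum_mono power_decreasing) auto
  also have "\<dots> \<le> 1 / (1 - q)" using assms by (simp add: sum_gp_strict divide_right_mono)
  finally show ?thesis .
qed

lemma quadratic_error_le:
  fixes n p L t :: real
  assumes n: "0 \<le> n" "n \<le> p" and L: "0 \<le> L" and t: "\<bar>t\<bar> \<le> L * n"
  shows "p * n + \<bar>t\<bar> * n + t^2 \<le> (1 + L + L^2) * (p * n)"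
proof -
  have "\<bar>t\<bar> * n \<le> (L * n) * n" using t n by (intro mult_right_mono) auto
  also have "\<dots> = L * (n * n)" by simp
  also have "\<dots> \<le> L * (p * n)" using n L by (intro mult_left_mono mult_right_mono) auto
  finally have 1: "\<bar>t\<bar> * n \<le> L * (p * n)" .
  have "t^2 = \<bar>t\<bar> * \<bar>t\<bar>" by (simp add: power2_eq_square)
  also have "\<dots> \<le> (L * n) * (L * n)" using t by (intro mult_mono) auto
  also have "\<dots> = L^2 * (n * n)" by (simp add: power2_eq_square)
  also have "\<dots> \<le> L^2 * (p * n)" using n by (intro mult_left_mono mult_right_mono) auto
  finally show ?thesis using 1 by (simp add: distrib_right)
qed

lemma powr_power_commute: "0 < g \<Longrightarrow> (g powr p) ^ k = (g ^ k) powr p" for g :: real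
proof -
  assume g: "0 < g"
  have "(g powr p) ^ k = (g powr p) powr real k" using g by (simp add: powr_realpow)
  also have "\<dots> = g powr (p * real k)" by (simp add: powr_powr)
  also have "\<dots> = (g powr real k) powr p" by (simp add: powr_powr mult.commute)
  also have "\<dots> = (g ^ k) powr p" using g by (simp add: powr_realpow)
  finally show ?thesis .
qed

lemma norm_add4_le: "norm (x1 + x2 + x3 + x4) \<le> norm x1 + norm x2 + norm x3 + (norm x4::real)"
  for x1 :: "'b::real_normed_vector"
proof -
  have "norm (x1 + x2 + x3 + x4) \<le> norm (x1 + x2 + x3) + norm x4" by (rule norm_triangle_ineq)
  moreover have "norm (x1 + x2 + x3) \<le> norm (x1 + x2) + norm x3" by (rule norm_triangle_ineq)
  moreover have "norm (x1 + x2) \<le> norm x1 + norm x2" by (rule norm_triangle_ineq)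
  ultimately show ?thesis by linarith
qed

definition seq_tl :: "(nat \<Rightarrow> nat) \<Rightarrow> nat \<Rightarrow> nat" where "seq_tl \<omega> = (\<lambda>i. \<omega> (Suc i))"
definition seq_drop :: "nat \<Rightarrow> (nat \<Rightarrow> nat) \<Rightarrow> nat \<Rightarrow> nat" where "seq_drop k \<omega> = (\<lambda>i. \<omega> (k + i))"

lemma fcomp_Nil[simp]: "fcomp f l [] x = x" by (simp add: fcomp_def)
lemma fcomp_Cons[simp]: "fcomp f l (j # w) x = f j l (fcomp f l w x)" by (simp add: fcomp_def)
lemma fcomp_append: "fcomp f l (u @ v) x = fcomp f l u (fcomp f l v x)"
  by (induction u) auto

lemma pref_Suc: "pref \<omega> (Suc n) = \<omega> 0 # pref (seq_tl \<omega>) n"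
  unfolding pref_def seq_tl_def by (induction n) auto

lemma pref_add: "pref \<omega> (n + p) = pref \<omega> n @ pref (seq_drop n \<omega>) p"
  unfolding pref_def seq_drop_def by (induction p) auto

lemma pref_0[simp]: "pref \<omega> 0 = []" by (simp add: pref_def)
lemma length_pref[simp]: "length (pref \<omega> n) = n" by (simp add: pref_def)

lemma seq_tl_in_seqs: "\<omega> \<in> seqs m \<Longrightarrow> seq_tl \<omega> \<in> seqs m" by (simp add: seqs_def seq_tl_def)
lemma seq_drop_in_seqs: "\<omega> \<in> seqs m \<Longrightarrow> seq_drop k \<omega> \<in> seqs m" by (simp add: seqs_def seq_drop_def)
lemma set_pref_seqs: "\<omega> \<in> seqs m \<Longrightarrow> set (pref \<omega> n) \<subseteq> {1..m}" by (auto simp: seqs_def pref_def)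
lemma seqs_letter: "\<omega> \<in> seqs m \<Longrightarrow> \<omega> i \<in> {1..m}" by (simp add: seqs_def)
lemma seq_drop_Suc: "seq_drop (Suc k) \<omega> = seq_drop k (seq_tl \<omega>)" by (simp add: seq_drop_def seq_tl_def)
lemma seq_drop_0[simp]: "seq_drop 0 \<omega> = \<omega>" by (simp add: seq_drop_def)

lemma first_difference:
  assumes "\<omega> \<noteq> \<tau>"
  defines "k \<equiv> LEAST n. \<omega> n \<noteq> \<tau> n"
  shows "seq_drop k \<omega> 0 \<noteq> seq_drop k \<tau> 0" "pref \<omega> k = pref \<tau> k" "common \<omega> \<tau> = pref \<omega> k"
proof -
  have ex: "\<exists>n. \<omega> n \<noteq> \<tau> n" using assms(1) by auto
  show "seq_drop k \<omega> 0 \<noteq> seq_drop k \<tau> 0" unfolding seq_drop_def k_def using LeastI_ex[OF ex] by simp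
  have "\<omega> i = \<tau> i" if "i < k" for i using not_less_Least[of i "\<lambda>n. \<omega> n \<noteq> \<tau> n"] that k_def by auto
  then show "pref \<omega> k = pref \<tau> k" unfolding pref_def by auto
  show "common \<omega> \<tau> = pref \<omega> k" unfolding common_def k_def ..
qed

locale ifs =
  fixes f :: "nat \<Rightarrow> 'a::euclidean_space \<Rightarrow> real \<Rightarrow> real" and m :: nat and a b \<delta> :: real
    and S :: "'a set" and fx fxx :: "nat \<Rightarrow> 'a \<Rightarrow> real \<Rightarrow> real" and fl flx :: "nat \<Rightarrow> 'a \<Rightarrow> real \<Rightarrow> 'a"
    and M \<gamma>1 \<gamma>2 :: real
  assumes ab: "a < b" and dl: "0 < \<delta>" "\<delta> \<le> 1" and cS: "convex S"
    and dS: "\<And>l \<mu>. l\<in>S \<Longrightarrow> \<mu>\<in>S \<Longrightarrow> norm (l - \<mu>) \<le> 1"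
    and gm: "0 < \<gamma>1" "\<gamma>1 \<le> \<gamma>2" "\<gamma>2 < 1" and Mp: "0 < M"
    and inX: "\<And>j l x. j\<in>{1..m} \<Longrightarrow> l\<in>S \<Longrightarrow> x\<in>{a..b} \<Longrightarrow> f j l x \<in> {a..b}"
    and dx: "\<And>j l x. j\<in>{1..m} \<Longrightarrow> l\<in>S \<Longrightarrow> x\<in>{a..b} \<Longrightarrow> (f j l has_real_derivative fx j l x) (at x within {a..b})"
    and dxx: "\<And>j l x. j\<in>{1..m} \<Longrightarrow> l\<in>S \<Longrightarrow> x\<in>{a..b} \<Longrightarrow> (fx j l has_real_derivative fxx j l x) (at x within {a..b})"
    and dlm: "\<And>j l x. j\<in>{1..m} \<Longrightarrow> l\<in>S \<Longrightarrow> x\<in>{a..b} \<Longrightarrow> ((\<lambda>\<mu>. f j \<mu> x) has_derivative (\<lambda>h. fl j l x \<bullet> h)) (at l within S)"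
    and dlx: "\<And>j l x. j\<in>{1..m} \<Longrightarrow> l\<in>S \<Longrightarrow> x\<in>{a..b} \<Longrightarrow> ((\<lambda>y. fl j l y) has_vector_derivative flx j l x) (at x within {a..b})"
    and bfx: "\<And>j l x. j\<in>{1..m} \<Longrightarrow> l\<in>S \<Longrightarrow> x\<in>{a..b} \<Longrightarrow> \<gamma>1 \<le> \<bar>fx j l x\<bar> \<and> \<bar>fx j l x\<bar> \<le> \<gamma>2"
    and bnd: "\<And>j l x. j\<in>{1..m} \<Longrightarrow> l\<in>S \<Longrightarrow> x\<in>{a..b} \<Longrightarrow> \<bar>fxx j l x\<bar> \<le> M \<and> norm (fl j l x) \<le> M \<and> norm (flx j l x) \<le> M"
    and hfx: "\<And>j l \<mu> x. j\<in>{1..m} \<Longrightarrow> l\<in>S \<Longrightarrow> \<mu>\<in>S \<Longrightarrow> x\<in>{a..b} \<Longrightarrow> \<bar>fx j l x - fx j \<mu> x\<bar> \<le> M * norm (l - \<mu>) powr \<delta>"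
    and hfl: "\<And>j l \<mu> x. j\<in>{1..m} \<Longrightarrow> l\<in>S \<Longrightarrow> \<mu>\<in>S \<Longrightarrow> x\<in>{a..b} \<Longrightarrow> norm (fl j l x - fl j \<mu> x) \<le> M * norm (l - \<mu>) powr \<delta>"
begin

lemma f_lipschitz_x:
  assumes "j\<in>{1..m}" "l\<in>S" "x\<in>{a..b}" "y\<in>{a..b}"
  shows "\<bar>f j l x - f j l y\<bar> \<le> \<gamma>2 * \<bar>x - y\<bar>"
  using field_differentiable_bound[of "{a..b}" "f j l" "fx j l" \<gamma>2 x y] dx bfx assms by auto

lemma fx_lipschitz:
  assumes "j\<in>{1..m}" "l\<in>S" "x\<in>{a..b}" "y\<in>{a..b}"
  shows "\<bar>fx j l x - fx j l y\<bar> \<le> M * \<bar>x - y\<bar>"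
  using field_differentiable_bound[of "{a..b}" "fx j l" "fxx j l" M x y] dxx bnd assms by auto

lemma fl_lipschitz:
  assumes "j\<in>{1..m}" "l\<in>S" "x\<in>{a..b}" "y\<in>{a..b}"
  shows "norm (fl j l x - fl j l y) \<le> M * \<bar>x - y\<bar>"
proof -
  have "norm (fl j l x - fl j l y) \<le> M * norm (x - y)"
  proof (rule differentiable_bound[of "{a..b}" "fl j l" "\<lambda>z h. h *\<^sub>R flx j l z"])
    show "convex {a..b}" by simp
    show "((fl j l) has_derivative (\<lambda>h. h *\<^sub>R flx j l z)) (at z within {a..b})" if "z\<in>{a..b}" for z
      using dlx[OF assms(1,2) that] by (simp add: has_vector_derivative_def)
    show "onorm (\<lambda>h. h *\<^sub>R flx j l z) \<le> M" if "z\<in>{a..b}" for z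
      using bnd[OF assms(1,2) that] onorm_scaleR_left[of "\<lambda>h::real. h" "flx j l z"]
      by (simp add: onorm_id bounded_linear_ident)
  qed (use assms in auto)
  then show ?thesis by simp
qed

lemma f_lipschitz_lam:
  assumes "j\<in>{1..m}" "l\<in>S" "\<mu>\<in>S" "x\<in>{a..b}"
  shows "\<bar>f j l x - f j \<mu> x\<bar> \<le> M * norm (l - \<mu>)"
proof -
  have "norm (f j l x - f j \<mu> x) \<le> M * norm (l - \<mu>)"
  proof (rule differentiable_bound[of S "\<lambda>\<nu>. f j \<nu> x" "\<lambda>\<nu> h. fl j \<nu> x \<bullet> h"])
    show "onorm (\<lambda>h. fl j \<nu> x \<bullet> h) \<le> M" if "\<nu>\<in>S" for \<nu>
      using onorm_inner_right[of "\<lambda>h. h" "fl j \<nu> x"] bnd[OF assms(1) that assms(4)]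
      by (simp add: onorm_id bounded_linear_ident)
  qed (use assms cS dlm in auto)
  then show ?thesis by simp
qed

lemma f_taylor_x:
  assumes "j\<in>{1..m}" "l\<in>S" "x\<in>{a..b}" "y\<in>{a..b}"
  shows "\<bar>f j l y - f j l x - fx j l x * (y - x)\<bar> \<le> M * (y - x)^2"
proof -
  let ?T = "closed_segment x y"
  have T: "?T \<subseteq> {a..b}" using assms by (intro closed_segment_subset) auto
  have "norm ((f j l y - fx j l x * y) - (f j l x - fx j l x * x)) \<le> (M * \<bar>y - x\<bar>) * norm (y - x)"
  proof (rule field_differentiable_bound[of ?T "\<lambda>z. f j l z - fx j l x * z" "\<lambda>z. fx j l z - fx j l x"])
    show "((\<lambda>z. f j l z - fx j l x * z) has_field_derivative fx j l z - fx j l x) (at z within ?T)"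
      if "z \<in> ?T" for z
    proof -
      have "(f j l has_real_derivative fx j l z) (at z within ?T)"
        using has_field_derivative_subset[OF dx[OF assms(1,2)] T] that T by auto
      then show ?thesis by (auto intro!: derivative_eq_intros)
    qed
    show "norm (fx j l z - fx j l x) \<le> M * \<bar>y - x\<bar>" if "z \<in> ?T" for z
    proof -
      have "\<bar>z - x\<bar> \<le> \<bar>y - x\<bar>" using segment_bound1[OF that] by simp
      then show ?thesis using fx_lipschitz[OF assms(1,2), of z x] that T assms Mp
        by (smt (verit, best) mult_left_mono real_norm_def subsetD)
    qed
  qed auto
  then show ?thesis by (simp add: algebra_simps power2_eq_square abs_mult)
qed

lemma f_taylor_lam:
  assumes "j\<in>{1..m}" "l\<in>S" "\<mu>\<in>S" "y\<in>{a..b}"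
  shows "\<bar>f j \<mu> y - f j l y - fl j l y \<bullet> (\<mu> - l)\<bar> \<le> M * norm (\<mu> - l) powr \<delta> * norm (\<mu> - l)"
proof -
  let ?T = "closed_segment l \<mu>"
  have T: "?T \<subseteq> S" using closed_segment_subset assms cS by blast
  have "norm ((f j \<mu> y - fl j l y \<bullet> \<mu>) - (f j l y - fl j l y \<bullet> l)) \<le> (M * norm (\<mu> - l) powr \<delta>) * norm (\<mu> - l)"
  proof (rule differentiable_bound[of ?T "\<lambda>\<nu>. f j \<nu> y - fl j l y \<bullet> \<nu>" "\<lambda>\<nu> h. (fl j \<nu> y - fl j l y) \<bullet> h"])
    show "((\<lambda>\<nu>. f j \<nu> y - fl j l y \<bullet> \<nu>) has_derivative (\<lambda>h. (fl j \<nu> y - fl j l y) \<bullet> h)) (at \<nu> within ?T)"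
      if "\<nu> \<in> ?T" for \<nu>
    proof -
      have "((\<lambda>\<nu>. f j \<nu> y - fl j l y \<bullet> \<nu>) has_derivative (\<lambda>h. fl j \<nu> y \<bullet> h - fl j l y \<bullet> h)) (at \<nu> within ?T)"
      proof -
        have "((\<lambda>\<nu>. f j \<nu> y) has_derivative (\<lambda>h. fl j \<nu> y \<bullet> h)) (at \<nu> within ?T)"
          using has_derivative_subset[OF dlm[OF assms(1) _ assms(4)] T] that T by auto
        then show ?thesis by (auto intro!: derivative_eq_intros)
      qed
      then show ?thesis by (simp add: inner_diff_left)
    qed
    show "onorm (\<lambda>h. (fl j \<nu> y - fl j l y) \<bullet> h) \<le> M * norm (\<mu> - l) powr \<delta>" if "\<nu> \<in> ?T" for \<nu>
    proof -
      have "onorm (\<lambda>h. (fl j \<nu> y - fl j l y) \<bullet> h) \<le> norm (fl j \<nu> y - fl j l y)"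
        using onorm_inner_right[of "\<lambda>h. h" "fl j \<nu> y - fl j l y"] by (simp add: onorm_id bounded_linear_ident)
      also have "\<dots> \<le> M * norm (\<nu> - l) powr \<delta>" using hfl[OF assms(1) _ assms(2,4), of \<nu>] that T by auto
      also have "\<dots> \<le> M * norm (\<mu> - l) powr \<delta>"
        using segment_bound1[OF that] dl Mp by (intro mult_left_mono powr_mono2) auto
      finally show ?thesis .
    qed
  qed auto
  then show ?thesis by (simp add: algebra_simps inner_diff_right)
qed

lemma f_taylor:
  assumes "j\<in>{1..m}" "l\<in>S" "\<mu>\<in>S" "x\<in>{a..b}" "y\<in>{a..b}"
  shows "\<bar>f j \<mu> y - f j l x - fl j l x \<bullet> (\<mu> - l) - fx j l x * (y - x)\<bar>
     \<le> M * (norm (\<mu> - l) powr \<delta> * norm (\<mu> - l) + \<bar>y - x\<bar> * norm (\<mu> - l) + (y - x)^2)"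
proof -
  have 1: "\<bar>f j \<mu> y - f j l y - fl j l y \<bullet> (\<mu> - l)\<bar> \<le> M * norm (\<mu> - l) powr \<delta> * norm (\<mu> - l)"
    using f_taylor_lam assms by auto
  have 2: "\<bar>(fl j l y - fl j l x) \<bullet> (\<mu> - l)\<bar> \<le> M * \<bar>y - x\<bar> * norm (\<mu> - l)"
    using Cauchy_Schwarz_ineq2[of "fl j l y - fl j l x" "\<mu> - l"] fl_lipschitz[OF assms(1,2,5,4)]
    by (smt (verit, best) mult_right_mono norm_ge_zero)
  have 3: "\<bar>f j l y - f j l x - fx j l x * (y - x)\<bar> \<le> M * (y - x)^2"
    using f_taylor_x assms by auto
  have "f j \<mu> y - f j l x - fl j l x \<bullet> (\<mu> - l) - fx j l x * (y - x)
     = (f j \<mu> y - f j l y - fl j l y \<bullet> (\<mu> - l)) + (fl j l y - fl j l x) \<bullet> (\<mu> - l)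
       + (f j l y - f j l x - fx j l x * (y - x))"
    by (simp add: inner_diff_left)
  then show ?thesis using 1 2 3 by (simp add: algebra_simps)
qed

lemma fcomp_in_X: "set w \<subseteq> {1..m} \<Longrightarrow> l\<in>S \<Longrightarrow> x\<in>{a..b} \<Longrightarrow> fcomp f l w x \<in> {a..b}"
proof (induction w)
  case (Cons j w) then show ?case using inX[of j l "fcomp f l w x"] by auto
qed simp

lemma fcomp_lipschitz: "set w \<subseteq> {1..m} \<Longrightarrow> l\<in>S \<Longrightarrow> x\<in>{a..b} \<Longrightarrow> y\<in>{a..b} \<Longrightarrow>
  \<bar>fcomp f l w x - fcomp f l w y\<bar> \<le> \<gamma>2 ^ length w * \<bar>x - y\<bar>"
proof (induction w)
  case (Cons j w)
  have "\<bar>fcomp f l (j#w) x - fcomp f l (j#w) y\<bar> \<le> \<gamma>2 * \<bar>fcomp f l w x - fcomp f l w y\<bar>"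
    using f_lipschitz_x[of j l "fcomp f l w x" "fcomp f l w y"] fcomp_in_X Cons.prems by auto
  also have "\<dots> \<le> \<gamma>2 * (\<gamma>2 ^ length w * \<bar>x - y\<bar>)" using Cons gm by (intro mult_left_mono) auto
  finally show ?case by simp
qed simp

lemma contraction_power_small: "\<exists>N. \<gamma>2 ^ N * (b - a) < e" if "0 < e"
proof -
  have "0 < e/(b-a)" using that ab by simp
  then obtain N where "\<gamma>2 ^ N < e / (b - a)"
    using real_arch_pow_inv[of "e/(b-a)" \<gamma>2] gm by blast
  then show ?thesis using ab by (auto simp: field_simps)
qed

lemma fcomp_pref_tail:
  assumes "\<omega> \<in> seqs m" "l \<in> S" "N \<le> n"
  shows "\<exists>y\<in>{a..b}. fcomp f l (pref \<omega> n) a = fcomp f l (pref \<omega> N) y"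
proof -
  obtain p where n: "n = N + p" using assms(3) le_Suc_ex by blast
  show ?thesis
    using fcomp_in_X[OF set_pref_seqs[OF seq_drop_in_seqs[OF assms(1)]] assms(2), of a N p] ab
    by (auto simp: n pref_add fcomp_append)
qed

lemma proj_LIMSEQ:
  assumes "\<omega> \<in> seqs m" "l \<in> S"
  shows "(\<lambda>n. fcomp f l (pref \<omega> n) a) \<longlonglongrightarrow> proj f a l \<omega>"
proof -
  let ?s = "\<lambda>n. fcomp f l (pref \<omega> n) a"
  have "Cauchy ?s"
  proof (rule metric_CauchyI)
    fix e :: real assume "0 < e"
    then obtain N where N: "\<gamma>2 ^ N * (b - a) < e" using contraction_power_small by blast
    have "dist (?s i) (?s j) < e" if ij: "N \<le> i" "N \<le> j" for i j
    proof -
      obtain y where y: "y\<in>{a..b}" "?s i = fcomp f l (pref \<omega> N) y"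
        using fcomp_pref_tail[OF assms ij(1)] by blast
      obtain z where z: "z\<in>{a..b}" "?s j = fcomp f l (pref \<omega> N) z"
        using fcomp_pref_tail[OF assms ij(2)] by blast
      note yz = y(1) z(1) y(2) z(2)
      have "\<bar>?s i - ?s j\<bar> \<le> \<gamma>2 ^ N * \<bar>y - z\<bar>"
        using fcomp_lipschitz[OF set_pref_seqs[OF assms(1)] assms(2) yz(1,2)] yz by simp
      also have "\<dots> \<le> \<gamma>2 ^ N * (b - a)" using yz gm by (intro mult_left_mono) auto
      finally show ?thesis using N by (simp add: dist_real_def)
    qed
    then show "\<exists>M. \<forall>i\<ge>M. \<forall>j\<ge>M. dist (?s i) (?s j) < e" by blast
  qed
  then show ?thesis unfolding proj_def by (simp add: Cauchy_convergent_iff convergent_LIMSEQ_iff)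
qed

lemma proj_in_X: "\<omega> \<in> seqs m \<Longrightarrow> l \<in> S \<Longrightarrow> proj f a l \<omega> \<in> {a..b}"
proof -
  assume as: "\<omega> \<in> seqs m" "l \<in> S"
  have inx: "fcomp f l (pref \<omega> n) a \<in> {a..b}" for n using fcomp_in_X[OF set_pref_seqs[OF as(1)] as(2)] ab by auto
  have "a \<le> proj f a l \<omega>" using inx by (intro LIMSEQ_le_const[OF proj_LIMSEQ[OF as]]) auto
  moreover have "proj f a l \<omega> \<le> b" using inx by (intro LIMSEQ_le_const2[OF proj_LIMSEQ[OF as]]) auto
  ultimately show ?thesis by auto
qed

lemma proj_approx:
  assumes "\<omega> \<in> seqs m" "l \<in> S"
  shows "\<bar>proj f a l \<omega> - fcomp f l (pref \<omega> N) a\<bar> \<le> \<gamma>2 ^ N * (b - a)"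
proof -
  have "(\<lambda>n. \<bar>fcomp f l (pref \<omega> n) a - fcomp f l (pref \<omega> N) a\<bar>) \<longlonglongrightarrow> \<bar>proj f a l \<omega> - fcomp f l (pref \<omega> N) a\<bar>"
    by (intro tendsto_intros proj_LIMSEQ[OF assms])
  moreover have "\<bar>fcomp f l (pref \<omega> n) a - fcomp f l (pref \<omega> N) a\<bar> \<le> \<gamma>2 ^ N * (b - a)" if le: "N \<le> n" for n
  proof -
    obtain y where y: "y\<in>{a..b}" "fcomp f l (pref \<omega> n) a = fcomp f l (pref \<omega> N) y"
      using fcomp_pref_tail[OF assms le] by blast
    have "\<bar>fcomp f l (pref \<omega> N) y - fcomp f l (pref \<omega> N) a\<bar> \<le> \<gamma>2 ^ N * \<bar>y - a\<bar>"
      using fcomp_lipschitz[OF set_pref_seqs[OF assms(1)] assms(2) y(1)] ab by simp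
    also have "\<dots> \<le> \<gamma>2 ^ N * (b - a)" using y gm by (intro mult_left_mono) auto
    finally show ?thesis using y by simp
  qed
  ultimately show ?thesis by (intro LIMSEQ_le_const2) auto
qed

lemma proj_unfold:
  assumes "\<omega> \<in> seqs m" "l \<in> S"
  shows "proj f a l \<omega> = f (\<omega> 0) l (proj f a l (seq_tl \<omega>))"
proof -
  let ?z = "\<bar>proj f a l \<omega> - f (\<omega> 0) l (proj f a l (seq_tl \<omega>))\<bar>"
  have b: "?z \<le> 2 * (b - a) * \<gamma>2 ^ n" for n
  proof -
    have 1: "\<bar>proj f a l \<omega> - f (\<omega> 0) l (fcomp f l (pref (seq_tl \<omega>) n) a)\<bar> \<le> \<gamma>2 ^ Suc n * (b - a)"
      using proj_approx[OF assms, of "Suc n"] by (simp add: pref_Suc)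
    have 2: "\<bar>f (\<omega> 0) l (fcomp f l (pref (seq_tl \<omega>) n) a) - f (\<omega> 0) l (proj f a l (seq_tl \<omega>))\<bar>
        \<le> \<gamma>2 * \<bar>fcomp f l (pref (seq_tl \<omega>) n) a - proj f a l (seq_tl \<omega>)\<bar>"
      using f_lipschitz_x[OF seqs_letter[OF assms(1)] assms(2)] fcomp_in_X[OF set_pref_seqs[OF seq_tl_in_seqs[OF assms(1)]] assms(2)]
        proj_in_X[OF seq_tl_in_seqs[OF assms(1)] assms(2)] ab by auto
    have 3: "\<gamma>2 * \<bar>fcomp f l (pref (seq_tl \<omega>) n) a - proj f a l (seq_tl \<omega>)\<bar> \<le> \<gamma>2 * (\<gamma>2 ^ n * (b - a))"
      using proj_approx[OF seq_tl_in_seqs[OF assms(1)] assms(2), of n] gm by (intro mult_left_mono) auto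
    have 4: "\<gamma>2 ^ Suc n * (b - a) \<le> \<gamma>2 ^ n * (b - a)"
      using gm ab by (intro mult_right_mono) (auto simp: power_decreasing)
    show ?thesis using 1 2 3 4 by (simp add: algebra_simps)
  qed
  have "(\<lambda>n. 2 * (b - a) * \<gamma>2 ^ n) \<longlonglongrightarrow> 2 * (b - a) * 0"
    using gm by (intro tendsto_intros) auto
  then have "(\<lambda>n. 2 * (b - a) * \<gamma>2 ^ n) \<longlonglongrightarrow> 0" by simp
  then have "?z \<le> 0" using b by (intro LIMSEQ_le_const[of _ 0]) auto
  then show ?thesis by simp
qed

lemma proj_unfold_pref:
  assumes "\<omega> \<in> seqs m" "l \<in> S"
  shows "proj f a l \<omega> = fcomp f l (pref \<omega> k) (proj f a l (seq_drop k \<omega>))"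
  using assms(1)
proof (induction k arbitrary: \<omega>)
  case (Suc k)
  then show ?case using proj_unfold[OF Suc.prems assms(2)] Suc.IH[OF seq_tl_in_seqs[OF Suc.prems]]
    by (simp add: pref_Suc seq_drop_Suc)
qed simp

definition "Lproj = M / (1 - \<gamma>2)"
definition proj_grad :: "'a \<Rightarrow> (nat \<Rightarrow> nat) \<Rightarrow> 'a" where
  "proj_grad l = cocycle_sum seq_tl (\<lambda>\<omega>. fl (\<omega> 0) l (proj f a l (seq_tl \<omega>))) (\<lambda>\<omega>. fx (\<omega> 0) l (proj f a l (seq_tl \<omega>)))"

lemma Lproj_pos: "0 < Lproj" using Mp gm by (simp add: Lproj_def)

lemma
  assumes "\<omega> \<in> seqs m" "l \<in> S"
  shows proj_grad_unfold: "proj_grad l \<omega> = fl (\<omega> 0) l (proj f a l (seq_tl \<omega>)) + fx (\<omega> 0) l (proj f a l (seq_tl \<omega>)) *\<^sub>R proj_grad l (seq_tl \<omega>)"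
    and norm_proj_grad_le: "norm (proj_grad l \<omega>) \<le> Lproj"
proof -
  have h: "norm (fl (\<omega> 0) l (proj f a l (seq_tl \<omega>))) \<le> M \<and> \<bar>fx (\<omega> 0) l (proj f a l (seq_tl \<omega>))\<bar> \<le> \<gamma>2"
    if "\<omega> \<in> seqs m" for \<omega>
    using bnd[OF seqs_letter[OF that] assms(2) proj_in_X[OF seq_tl_in_seqs[OF that] assms(2)]]
      bfx[OF seqs_letter[OF that] assms(2) proj_in_X[OF seq_tl_in_seqs[OF that] assms(2)]] by auto
  note gp = cocycle_sum_unfold[of "seqs m" seq_tl "\<lambda>\<omega>. fl (\<omega> 0) l (proj f a l (seq_tl \<omega>))" M
      "\<lambda>\<omega>. fx (\<omega> 0) l (proj f a l (seq_tl \<omega>))" \<gamma>2 \<omega>]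
    norm_cocycle_sum_le[of "seqs m" seq_tl "\<lambda>\<omega>. fl (\<omega> 0) l (proj f a l (seq_tl \<omega>))" M
      "\<lambda>\<omega>. fx (\<omega> 0) l (proj f a l (seq_tl \<omega>))" \<gamma>2 \<omega>]
  show "proj_grad l \<omega> = fl (\<omega> 0) l (proj f a l (seq_tl \<omega>)) + fx (\<omega> 0) l (proj f a l (seq_tl \<omega>)) *\<^sub>R proj_grad l (seq_tl \<omega>)"
    unfolding proj_grad_def using gp(1) h seq_tl_in_seqs assms gm by auto
  show "norm (proj_grad l \<omega>) \<le> Lproj"
    unfolding proj_grad_def Lproj_def using gp(2) h seq_tl_in_seqs assms gm by auto
qed

lemma proj_lipschitz_lam:
  assumes "\<omega> \<in> seqs m" "l \<in> S" "\<mu> \<in> S"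
  shows "\<bar>proj f a \<mu> \<omega> - proj f a l \<omega>\<bar> \<le> Lproj * norm (\<mu> - l)"
proof -
  have "\<bar>proj f a \<mu> \<omega> - proj f a l \<omega>\<bar> \<le> M * norm (\<mu> - l) / (1 - \<gamma>2)"
  proof (rule contraction_bound[of "seqs m" seq_tl "\<lambda>\<omega>. \<bar>proj f a \<mu> \<omega> - proj f a l \<omega>\<bar>" "b - a"])
    fix \<omega> assume w: "\<omega> \<in> seqs m"
    show "\<bar>proj f a \<mu> \<omega> - proj f a l \<omega>\<bar> \<le> b - a" using proj_in_X[OF w assms(2)] proj_in_X[OF w assms(3)] by auto
    let ?y = "proj f a l (seq_tl \<omega>)" and ?y' = "proj f a \<mu> (seq_tl \<omega>)"
    have yX: "?y \<in> {a..b}" "?y' \<in> {a..b}" using proj_in_X[OF seq_tl_in_seqs[OF w]] assms by auto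
    have "proj f a \<mu> \<omega> - proj f a l \<omega> = (f (\<omega> 0) \<mu> ?y' - f (\<omega> 0) l ?y') + (f (\<omega> 0) l ?y' - f (\<omega> 0) l ?y)"
      using proj_unfold[OF w assms(2)] proj_unfold[OF w assms(3)] by simp
    moreover have "\<bar>f (\<omega> 0) \<mu> ?y' - f (\<omega> 0) l ?y'\<bar> \<le> M * norm (\<mu> - l)"
      using f_lipschitz_lam[OF seqs_letter[OF w] assms(3,2) yX(2)] .
    moreover have "\<bar>f (\<omega> 0) l ?y' - f (\<omega> 0) l ?y\<bar> \<le> \<gamma>2 * \<bar>?y' - ?y\<bar>"
      using f_lipschitz_x[OF seqs_letter[OF w] assms(2) yX(2,1)] .
    ultimately show "\<bar>proj f a \<mu> \<omega> - proj f a l \<omega>\<bar> \<le> M * norm (\<mu> - l) + \<gamma>2 * \<bar>?y' - ?y\<bar>"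
      by linarith
  qed (use assms gm Mp seq_tl_in_seqs in auto)
  then show ?thesis by (simp add: Lproj_def)
qed

definition "Crem = M * (1 + Lproj + Lproj^2) / (1 - \<gamma>2)"

lemma le_powr_self: "0 \<le> x \<Longrightarrow> x \<le> 1 \<Longrightarrow> x \<le> x powr \<delta>"
  using powr_mono'[of \<delta> 1 x] dl by (cases "x = 0") auto

lemma proj_taylor_lam_step:
  assumes w: "\<omega> \<in> seqs m" and "l \<in> S" "\<mu> \<in> S"
  shows "\<bar>proj f a \<mu> \<omega> - proj f a l \<omega> - proj_grad l \<omega> \<bullet> (\<mu> - l)\<bar>
    \<le> M * (1 + Lproj + Lproj^2) * (norm (\<mu> - l) powr \<delta> * norm (\<mu> - l))
      + \<gamma>2 * \<bar>proj f a \<mu> (seq_tl \<omega>) - proj f a l (seq_tl \<omega>) - proj_grad l (seq_tl \<omega>) \<bullet> (\<mu> - l)\<bar>"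
proof -
  let ?n = "norm (\<mu> - l)"
  have np: "?n \<le> ?n powr \<delta>" using le_powr_self dS assms by auto
  let ?A = "M * (1 + Lproj + Lproj^2) * (?n powr \<delta> * ?n)"
  let ?y = "proj f a l (seq_tl \<omega>)" and ?y' = "proj f a \<mu> (seq_tl \<omega>)" and ?j = "\<omega> 0"
  have yX: "?y \<in> {a..b}" "?y' \<in> {a..b}" using proj_in_X[OF seq_tl_in_seqs[OF w]] assms by auto
  have dy: "\<bar>?y' - ?y\<bar> \<le> Lproj * ?n" using proj_lipschitz_lam[OF seq_tl_in_seqs[OF w] assms(2,3)] .
  have eq: "proj f a \<mu> \<omega> - proj f a l \<omega> - proj_grad l \<omega> \<bullet> (\<mu> - l)
     = (f ?j \<mu> ?y' - f ?j l ?y - fl ?j l ?y \<bullet> (\<mu> - l) - fx ?j l ?y * (?y' - ?y))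
       + fx ?j l ?y * (?y' - ?y - proj_grad l (seq_tl \<omega>) \<bullet> (\<mu> - l))"
    using proj_unfold[OF w assms(2)] proj_unfold[OF w assms(3)] proj_grad_unfold[OF w assms(2)]
    by (simp add: inner_add_left algebra_simps)
  have t: "\<bar>f ?j \<mu> ?y' - f ?j l ?y - fl ?j l ?y \<bullet> (\<mu> - l) - fx ?j l ?y * (?y' - ?y)\<bar>
      \<le> M * (?n powr \<delta> * ?n + \<bar>?y' - ?y\<bar> * ?n + (?y' - ?y)^2)"
    using f_taylor[OF seqs_letter[OF w] assms(2,3) yX(1,2)] .
  have "?n powr \<delta> * ?n + \<bar>?y' - ?y\<bar> * ?n + (?y' - ?y)^2 \<le> (1 + Lproj + Lproj^2) * (?n powr \<delta> * ?n)"
    using quadratic_error_le[OF norm_ge_zero np less_imp_le[OF Lproj_pos] dy] .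
  then have "M * (?n powr \<delta> * ?n + \<bar>?y' - ?y\<bar> * ?n + (?y' - ?y)^2) \<le> M * ((1 + Lproj + Lproj^2) * (?n powr \<delta> * ?n))"
    using Mp by (intro mult_left_mono) auto
  then have t2: "\<bar>f ?j \<mu> ?y' - f ?j l ?y - fl ?j l ?y \<bullet> (\<mu> - l) - fx ?j l ?y * (?y' - ?y)\<bar> \<le> ?A"
    using t by (simp add: mult.assoc)
  have "\<bar>fx ?j l ?y * (?y' - ?y - proj_grad l (seq_tl \<omega>) \<bullet> (\<mu> - l))\<bar> \<le> \<gamma>2 * \<bar>?y' - ?y - proj_grad l (seq_tl \<omega>) \<bullet> (\<mu> - l)\<bar>"
    using bfx[OF seqs_letter[OF w] assms(2) yX(1)] by (simp add: abs_mult mult_right_mono)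
  then show ?thesis unfolding eq using t2 by linarith
qed

lemma proj_taylor_lam:
  assumes "\<omega> \<in> seqs m" "l \<in> S" "\<mu> \<in> S"
  shows "\<bar>proj f a \<mu> \<omega> - proj f a l \<omega> - proj_grad l \<omega> \<bullet> (\<mu> - l)\<bar> \<le> Crem * (norm (\<mu> - l) powr \<delta> * norm (\<mu> - l))"
proof -
  let ?n = "norm (\<mu> - l)"
  let ?A = "M * (1 + Lproj + Lproj^2) * (?n powr \<delta> * ?n)"
  have "\<bar>proj f a \<mu> \<omega> - proj f a l \<omega> - proj_grad l \<omega> \<bullet> (\<mu> - l)\<bar> \<le> ?A / (1 - \<gamma>2)"
  proof (rule contraction_bound[of "seqs m" seq_tl "\<lambda>\<omega>. \<bar>proj f a \<mu> \<omega> - proj f a l \<omega> - proj_grad l \<omega> \<bullet> (\<mu> - l)\<bar>" "b - a + Lproj * ?n"])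
    fix \<omega> assume w: "\<omega> \<in> seqs m"
    have "\<bar>proj_grad l \<omega> \<bullet> (\<mu> - l)\<bar> \<le> Lproj * ?n"
      using Cauchy_Schwarz_ineq2[of "proj_grad l \<omega>" "\<mu> - l"] norm_proj_grad_le[OF w assms(2)]
      by (meson mult_right_mono norm_ge_zero order_trans)
    then show "\<bar>proj f a \<mu> \<omega> - proj f a l \<omega> - proj_grad l \<omega> \<bullet> (\<mu> - l)\<bar> \<le> b - a + Lproj * ?n"
      using proj_in_X[OF w assms(2)] proj_in_X[OF w assms(3)] by auto
    show "\<bar>proj f a \<mu> \<omega> - proj f a l \<omega> - proj_grad l \<omega> \<bullet> (\<mu> - l)\<bar>
        \<le> ?A + \<gamma>2 * \<bar>proj f a \<mu> (seq_tl \<omega>) - proj f a l (seq_tl \<omega>) - proj_grad l (seq_tl \<omega>) \<bullet> (\<mu> - l)\<bar>"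
      using proj_taylor_lam_step[OF w assms(2,3)] .
  qed (use assms gm Mp Lproj_pos seq_tl_in_seqs in auto)
  then show ?thesis by (simp add: Crem_def)
qed

lemma Crem_pos: "0 < Crem" using Mp gm Lproj_pos by (simp add: Crem_def add_pos_nonneg)

lemma proj_has_derivative:
  assumes "\<omega> \<in> seqs m" "l \<in> S"
  shows "((\<lambda>\<mu>. proj f a \<mu> \<omega>) has_derivative (\<lambda>h. proj_grad l \<omega> \<bullet> h)) (at l within S)"
  unfolding has_derivative_within_alt
proof (intro conjI allI impI)
  show "bounded_linear (\<lambda>h. proj_grad l \<omega> \<bullet> h)" by (rule bounded_linear_inner_right)
  fix e :: real assume e: "0 < e"
  define d where "d = (e / Crem) powr (1 / \<delta>)"
  have d: "0 < d" using e Crem_pos by (simp add: d_def)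
  have dd: "d powr \<delta> = e / Crem" using e Crem_pos dl by (simp add: d_def powr_powr)
  show "\<exists>d>0. \<forall>y\<in>S. norm (y - l) < d \<longrightarrow>
      norm (proj f a y \<omega> - proj f a l \<omega> - proj_grad l \<omega> \<bullet> (y - l)) \<le> e * norm (y - l)"
  proof (intro exI[of _ d] conjI ballI impI d)
    fix y assume y: "y \<in> S" "norm (y - l) < d"
    have "norm (proj f a y \<omega> - proj f a l \<omega> - proj_grad l \<omega> \<bullet> (y - l)) \<le> Crem * (norm (y - l) powr \<delta> * norm (y - l))"
      using proj_taylor_lam[OF assms y(1)] by simp
    also have "\<dots> \<le> Crem * (d powr \<delta> * norm (y - l))"
      using y dl Crem_pos by (intro mult_left_mono mult_right_mono powr_mono2) auto
    also have "\<dots> = e * norm (y - l)" using dd Crem_pos by simp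
    finally show "norm (proj f a y \<omega> - proj f a l \<omega> - proj_grad l \<omega> \<bullet> (y - l)) \<le> e * norm (y - l)" .
  qed
qed

definition "Chol = M * (1 + Lproj) * (1 + Lproj) / (1 - \<gamma>2)"

lemma Chol_pos: "0 < Chol" using Mp Lproj_pos gm by (simp add: Chol_def)

lemma proj_grad_hoelder_step:
  assumes w: "\<omega> \<in> seqs m" and "l \<in> S" "\<mu> \<in> S"
  shows "norm (proj_grad \<mu> \<omega> - proj_grad l \<omega>)
    \<le> M * (1 + Lproj) * (1 + Lproj) * norm (\<mu> - l) powr \<delta>
      + \<gamma>2 * norm (proj_grad \<mu> (seq_tl \<omega>) - proj_grad l (seq_tl \<omega>))"
proof -
  let ?n = "norm (\<mu> - l)" let ?p = "?n powr \<delta>"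
  have np: "?n \<le> ?p" using le_powr_self dS assms by auto
  let ?A = "M * (1 + Lproj) * (1 + Lproj) * ?p"
  let ?y = "proj f a l (seq_tl \<omega>)" and ?y' = "proj f a \<mu> (seq_tl \<omega>)" and ?j = "\<omega> 0"
  have yX: "?y \<in> {a..b}" "?y' \<in> {a..b}" using proj_in_X[OF seq_tl_in_seqs[OF w]] assms by auto
  have dy: "\<bar>?y' - ?y\<bar> \<le> Lproj * ?p"
    using proj_lipschitz_lam[OF seq_tl_in_seqs[OF w] assms(2,3)] mult_left_mono[OF np less_imp_le[OF Lproj_pos]] by linarith
  have j: "?j \<in> {1..m}" using seqs_letter[OF w] .
  have eq: "proj_grad \<mu> \<omega> - proj_grad l \<omega> = (fl ?j \<mu> ?y' - fl ?j l ?y') + (fl ?j l ?y' - fl ?j l ?y)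
     + (fx ?j \<mu> ?y' - fx ?j l ?y) *\<^sub>R proj_grad \<mu> (seq_tl \<omega>) + fx ?j l ?y *\<^sub>R (proj_grad \<mu> (seq_tl \<omega>) - proj_grad l (seq_tl \<omega>))"
    using proj_grad_unfold[OF w assms(2)] proj_grad_unfold[OF w assms(3)] by (simp add: algebra_simps)
  have 1: "norm (fl ?j \<mu> ?y' - fl ?j l ?y') \<le> M * ?p" using hfl[OF j assms(3,2) yX(2)] .
  have 2: "norm (fl ?j l ?y' - fl ?j l ?y) \<le> M * (Lproj * ?p)"
    using fl_lipschitz[OF j assms(2) yX(2,1)] mult_left_mono[OF dy less_imp_le[OF Mp]] by linarith
  have 3: "\<bar>fx ?j \<mu> ?y' - fx ?j l ?y\<bar> \<le> M * ?p + M * (Lproj * ?p)"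
  proof -
    have "\<bar>fx ?j \<mu> ?y' - fx ?j l ?y\<bar> \<le> \<bar>fx ?j \<mu> ?y' - fx ?j l ?y'\<bar> + \<bar>fx ?j l ?y' - fx ?j l ?y\<bar>" by arith
    then show ?thesis
      using hfx[OF j assms(3,2) yX(2)] fx_lipschitz[OF j assms(2) yX(2,1)] mult_left_mono[OF dy less_imp_le[OF Mp]]
      by linarith
  qed
  have h3b: "norm ((fx ?j \<mu> ?y' - fx ?j l ?y) *\<^sub>R proj_grad \<mu> (seq_tl \<omega>)) \<le> (M * ?p + M * (Lproj * ?p)) * Lproj"
    using 3 norm_proj_grad_le[OF seq_tl_in_seqs[OF w] assms(3)] by (simp add: mult_mono)
  have 4: "norm (fx ?j l ?y *\<^sub>R (proj_grad \<mu> (seq_tl \<omega>) - proj_grad l (seq_tl \<omega>))) \<le> \<gamma>2 * norm (proj_grad \<mu> (seq_tl \<omega>) - proj_grad l (seq_tl \<omega>))"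
    using bfx[OF j assms(2) yX(1)] by (simp add: mult_right_mono)
  have sumeq: "M * ?p + M * (Lproj * ?p) + (M * ?p + M * (Lproj * ?p)) * Lproj = ?A" by (simp add: algebra_simps)
  show ?thesis
    unfolding eq using 1 2 h3b 4 sumeq norm_add4_le[of "fl ?j \<mu> ?y' - fl ?j l ?y'" "fl ?j l ?y' - fl ?j l ?y"
      "(fx ?j \<mu> ?y' - fx ?j l ?y) *\<^sub>R proj_grad \<mu> (seq_tl \<omega>)" "fx ?j l ?y *\<^sub>R (proj_grad \<mu> (seq_tl \<omega>) - proj_grad l (seq_tl \<omega>))"]
    by linarith
qed

lemma proj_grad_hoelder:
  assumes "\<omega> \<in> seqs m" "l \<in> S" "\<mu> \<in> S"
  shows "norm (proj_grad \<mu> \<omega> - proj_grad l \<omega>) \<le> Chol * norm (\<mu> - l) powr \<delta>"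
proof -
  let ?A = "M * (1 + Lproj) * (1 + Lproj) * norm (\<mu> - l) powr \<delta>"
  have "norm (proj_grad \<mu> \<omega> - proj_grad l \<omega>) \<le> ?A / (1 - \<gamma>2)"
  proof (rule contraction_bound[of "seqs m" seq_tl "\<lambda>\<omega>. norm (proj_grad \<mu> \<omega> - proj_grad l \<omega>)" "2 * Lproj"])
    fix \<omega> assume w: "\<omega> \<in> seqs m"
    show "norm (proj_grad \<mu> \<omega> - proj_grad l \<omega>) \<le> 2 * Lproj"
      using norm_proj_grad_le[OF w assms(2)] norm_proj_grad_le[OF w assms(3)]
        norm_triangle_ineq4[of "proj_grad \<mu> \<omega>" "proj_grad l \<omega>"] by auto
    show "norm (proj_grad \<mu> \<omega> - proj_grad l \<omega>) \<le> ?A + \<gamma>2 * norm (proj_grad \<mu> (seq_tl \<omega>) - proj_grad l (seq_tl \<omega>))"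
      using proj_grad_hoelder_step[OF w assms(2,3)] .
  qed (use assms gm Mp Lproj_pos seq_tl_in_seqs in auto)
  then show ?thesis by (simp add: Chol_def)
qed

definition "Kfx = M / \<gamma>1"

lemma Kfx_pos: "0 < Kfx" using Mp gm by (simp add: Kfx_def)

lemma M_le_Kfx: "j\<in>{1..m} \<Longrightarrow> l\<in>S \<Longrightarrow> x\<in>{a..b} \<Longrightarrow> M \<le> Kfx * \<bar>fx j l x\<bar>"
  using bfx[of j l x] gm Mp unfolding Kfx_def
  by (simp add: field_simps)

lemma f_has_derivative_at:
  assumes "j\<in>{1..m}" "l\<in>S" "a < z" "z < b"
  shows "(f j l has_real_derivative fx j l z) (at z)"
proof -
  have i: "z \<in> interior {a..b}" using assms by auto
  have "(f j l has_real_derivative fx j l z) (at z within {a..b})" using dx[OF assms(1,2), of z] assms by auto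
  then show ?thesis unfolding at_within_interior[OF i] .
qed

lemma f_mean_value:
  assumes j: "j\<in>{1..m}" and l: "l\<in>S" and uv: "u\<in>{a..b}" "v\<in>{a..b}"
  shows "\<exists>\<xi>\<in>{a..b}. \<bar>f j l u - f j l v\<bar> = \<bar>fx j l \<xi>\<bar> * \<bar>u - v\<bar> \<and> \<bar>\<xi> - u\<bar> \<le> \<bar>u - v\<bar>"
proof (cases "u = v")
  case True then show ?thesis using uv by auto
next
  case False
  define p where "p = min u v" define q where "q = max u v"
  have pq: "p < q" "a \<le> p" "q \<le> b" using False uv by (auto simp: p_def q_def)
  have cont: "continuous_on {p..q} (f j l)"
    by (rule DERIV_continuous_on[of _ _ "fx j l"])
       (use pq in \<open>auto intro: has_field_derivative_subset[OF dx[OF j l]]\<close>)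
  obtain d z where z: "p < z" "z < q" "DERIV (f j l) z :> d" "f j l q - f j l p = (q - p) * d"
  proof -
    have "f j l differentiable (at x)" if "p < x" "x < q" for x
      using f_has_derivative_at[OF j l, of x] that pq unfolding real_differentiable_def by auto
    then show ?thesis using MVT[OF pq(1) cont] that by blast
  qed
  have "d = fx j l z" using DERIV_unique[OF z(3) f_has_derivative_at[OF j l]] z pq by auto
  then have e1: "\<bar>f j l q - f j l p\<bar> = \<bar>fx j l z\<bar> * (q - p)"
    using z(4) pq by (simp add: abs_mult)
  have e2: "\<bar>f j l u - f j l v\<bar> = \<bar>f j l q - f j l p\<bar>" "\<bar>u - v\<bar> = q - p"
    by (auto simp: p_def q_def min_def max_def abs_minus_commute)
  have "\<bar>f j l u - f j l v\<bar> = \<bar>fx j l z\<bar> * \<bar>u - v\<bar>" using e1 e2 by simp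
  moreover have "\<bar>z - u\<bar> \<le> \<bar>u - v\<bar>" using z by (auto simp: p_def q_def)
  moreover have "z \<in> {a..b}" using z pq by auto
  ultimately show ?thesis by blast
qed

lemma f_step_lower:
  assumes j: "j\<in>{1..m}" and l: "l\<in>S" and uv: "u\<in>{a..b}" "v\<in>{a..b}"
  shows "\<bar>fx j l u\<bar> * \<bar>u - v\<bar> \<le> (1 + Kfx * \<bar>u - v\<bar>) * \<bar>f j l u - f j l v\<bar>"
proof -
  obtain \<xi> where xi: "\<xi>\<in>{a..b}" "\<bar>f j l u - f j l v\<bar> = \<bar>fx j l \<xi>\<bar> * \<bar>u - v\<bar>" "\<bar>\<xi> - u\<bar> \<le> \<bar>u - v\<bar>"
    using f_mean_value[OF j l uv] by blast
  have "\<bar>fx j l u\<bar> \<le> \<bar>fx j l \<xi>\<bar> + M * \<bar>\<xi> - u\<bar>"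
    using fx_lipschitz[OF j l xi(1) uv(1)] by linarith
  also have "\<dots> \<le> \<bar>fx j l \<xi>\<bar> + Kfx * \<bar>fx j l \<xi>\<bar> * \<bar>u - v\<bar>"
    using M_le_Kfx[OF j l xi(1)] xi(3) Mp
    by (intro add_left_mono mult_mono) (auto simp: Kfx_pos less_imp_le)
  finally have "\<bar>fx j l u\<bar> \<le> \<bar>fx j l \<xi>\<bar> * (1 + Kfx * \<bar>u - v\<bar>)" by (simp add: algebra_simps)
  then have "\<bar>fx j l u\<bar> * \<bar>u - v\<bar> \<le> \<bar>fx j l \<xi>\<bar> * (1 + Kfx * \<bar>u - v\<bar>) * \<bar>u - v\<bar>"
    by (rule mult_right_mono) simp
  then show ?thesis using xi(2) by (simp add: algebra_simps)
qed

lemma f_step_upper: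
  assumes j: "j\<in>{1..m}" and l: "l\<in>S" and uv: "u\<in>{a..b}" "v\<in>{a..b}"
  shows "\<bar>f j l u - f j l v\<bar> \<le> \<bar>fx j l v\<bar> * (1 + Kfx * \<bar>u - v\<bar>) * \<bar>u - v\<bar>"
proof -
  have t: "\<bar>f j l u - f j l v - fx j l v * (u - v)\<bar> \<le> M * (u - v)^2" using f_taylor_x[OF j l uv(2,1)] .
  have "M * (u - v)^2 \<le> Kfx * \<bar>fx j l v\<bar> * \<bar>u - v\<bar> * \<bar>u - v\<bar>"
  proof -
    have "M * (u - v)^2 = M * (\<bar>u - v\<bar> * \<bar>u - v\<bar>)" by (simp add: power2_eq_square abs_mult_self)
    also have "\<dots> \<le> (Kfx * \<bar>fx j l v\<bar>) * (\<bar>u - v\<bar> * \<bar>u - v\<bar>)"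
      using M_le_Kfx[OF j l uv(2)] by (rule mult_right_mono) simp
    finally show ?thesis by (simp add: mult.assoc)
  qed
  then have "\<bar>f j l u - f j l v\<bar> \<le> \<bar>fx j l v\<bar> * \<bar>u - v\<bar> + Kfx * \<bar>fx j l v\<bar> * \<bar>u - v\<bar> * \<bar>u - v\<bar>"
  proof -
    have "\<bar>f j l u - f j l v\<bar> \<le> \<bar>f j l u - f j l v - fx j l v * (u - v)\<bar> + \<bar>fx j l v * (u - v)\<bar>"
      using abs_triangle_ineq[of "f j l u - f j l v - fx j l v * (u - v)" "fx j l v * (u - v)"] by simp
    moreover have "\<bar>fx j l v * (u - v)\<bar> = \<bar>fx j l v\<bar> * \<bar>u - v\<bar>" by (simp add: abs_mult)
    ultimately show ?thesis using t \<open>M * (u - v)^2 \<le> _\<close> by linarith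
  qed
  then show ?thesis by (simp add: algebra_simps)
qed

lemma fx_ratio_le:
  assumes j: "j\<in>{1..m}" and l: "l\<in>S" and uv: "u\<in>{a..b}" "v\<in>{a..b}"
  shows "\<bar>fx j l u\<bar> \<le> \<bar>fx j l v\<bar> * (1 + Kfx * \<bar>u - v\<bar>)"
proof -
  have "\<bar>fx j l u\<bar> \<le> \<bar>fx j l v\<bar> + M * \<bar>u - v\<bar>" using fx_lipschitz[OF j l uv] by linarith
  also have "\<dots> \<le> \<bar>fx j l v\<bar> + Kfx * \<bar>fx j l v\<bar> * \<bar>u - v\<bar>"
    using M_le_Kfx[OF j l uv(2)] by (intro add_left_mono mult_right_mono) auto
  finally show ?thesis by (simp add: algebra_simps)
qed

text \<open>Chain-rule derivatives of \<open>fcomp\<close> in \<open>x\<close> and in \<open>\<lambda>\<close>; only their recursions are used.\<close>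
primrec dx_fcomp :: "nat list \<Rightarrow> 'a \<Rightarrow> real \<Rightarrow> real" where
  "dx_fcomp [] l x = 1"
| "dx_fcomp (j # w) l x = fx j l (fcomp f l w x) * dx_fcomp w l x"

primrec dlam_fcomp :: "nat list \<Rightarrow> 'a \<Rightarrow> real \<Rightarrow> 'a" where
  "dlam_fcomp [] l x = 0"
| "dlam_fcomp (j # w) l x = fl j l (fcomp f l w x) + fx j l (fcomp f l w x) *\<^sub>R dlam_fcomp w l x"

definition "distortion_prod n = (\<Prod>i<n. 1 + Kfx * \<gamma>2^i * (b - a))"
definition "Kdist = exp (Kfx * (b - a) / (1 - \<gamma>2))"
definition "geom_sum n = (\<Sum>i<n. \<gamma>2^i)"

lemma geom_sum_Suc: "geom_sum (Suc n) = geom_sum n + \<gamma>2^n" by (simp add: geom_sum_def)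
lemma geom_sum_le: "geom_sum n \<le> 1 / (1 - \<gamma>2)"
  using gm by (simp add: geom_sum_def sum_gp_strict divide_right_mono)

lemma distortion_prod_0[simp]: "distortion_prod 0 = 1" by (simp add: distortion_prod_def)
lemma distortion_prod_Suc: "distortion_prod (Suc n) = distortion_prod n * (1 + Kfx * \<gamma>2^n * (b - a))" by (simp add: distortion_prod_def)
lemma distortion_prod_ge_1: "1 \<le> distortion_prod n"
  unfolding distortion_prod_def using Kfx_pos gm ab by (intro prod_ge_1) auto
lemma distortion_prod_le: "distortion_prod n \<le> Kdist"
proof -
  have "distortion_prod n \<le> (\<Prod>i<n. exp (Kfx * \<gamma>2^i * (b - a)))"
    unfolding distortion_prod_def using Kfx_pos gm ab
    by (intro prod_mono) (auto simp: exp_ge_add_one_self add_nonneg_nonneg)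
  also have "\<dots> = exp (\<Sum>i<n. Kfx * \<gamma>2^i * (b - a))" by (simp add: exp_sum)
  also have "(\<Sum>i<n. Kfx * \<gamma>2^i * (b - a)) = Kfx * (b - a) * geom_sum n"
    unfolding geom_sum_def sum_distrib_left by (intro sum.cong) auto
  also have "\<dots> \<le> Kfx * (b - a) * (1 / (1 - \<gamma>2))"
    using Kfx_pos ab geom_sum_le by (intro mult_left_mono) auto
  finally show ?thesis by (simp add: Kdist_def)
qed
lemma Kdist_ge_1: "1 \<le> Kdist" using distortion_prod_ge_1 distortion_prod_le order_trans by blast

lemma fcomp_contracts:
  assumes "set w \<subseteq> {1..m}" "l\<in>S" "x\<in>{a..b}" "y\<in>{a..b}"
  shows "\<bar>fcomp f l w x - fcomp f l w y\<bar> \<le> \<gamma>2 ^ length w * (b - a)"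
    and "1 + Kfx * \<bar>fcomp f l w x - fcomp f l w y\<bar> \<le> 1 + Kfx * \<gamma>2 ^ length w * (b - a)"
proof -
  have "\<bar>fcomp f l w x - fcomp f l w y\<bar> \<le> \<gamma>2 ^ length w * \<bar>x - y\<bar>" using fcomp_lipschitz assms by blast
  also have "\<dots> \<le> \<gamma>2 ^ length w * (b - a)" using assms gm by (intro mult_left_mono) auto
  finally show 1: "\<bar>fcomp f l w x - fcomp f l w y\<bar> \<le> \<gamma>2 ^ length w * (b - a)" .
  show "1 + Kfx * \<bar>fcomp f l w x - fcomp f l w y\<bar> \<le> 1 + Kfx * \<gamma>2 ^ length w * (b - a)"
    using mult_left_mono[OF 1 less_imp_le[OF Kfx_pos]] by (simp add: mult.assoc)
qed

lemma dx_fcomp_distortion: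
  assumes "set w \<subseteq> {1..m}" "l\<in>S" "x\<in>{a..b}" "y\<in>{a..b}"
  shows "\<bar>dx_fcomp w l x\<bar> \<le> distortion_prod (length w) * \<bar>dx_fcomp w l y\<bar>"
  using assms
proof (induction w)
  case Nil then show ?case by simp
next
  case (Cons j w)
  have j: "j \<in> {1..m}" and w: "set w \<subseteq> {1..m}" using Cons by auto
  let ?U = "fcomp f l w x" and ?V = "fcomp f l w y" and ?n = "length w"
  have UV1: "?U \<in> {a..b}" "?V \<in> {a..b}" using fcomp_in_X w Cons by auto
  have "\<bar>fx j l ?U\<bar> \<le> \<bar>fx j l ?V\<bar> * (1 + Kfx * \<gamma>2 ^ ?n * (b - a))"
    using fx_ratio_le[OF j Cons(3) UV1] fcomp_contracts(2)[OF w Cons(3-5)] mult_left_mono[of _ _ "\<bar>fx j l ?V\<bar>"]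
    by (meson abs_ge_zero order_trans)
  moreover have "\<bar>dx_fcomp w l x\<bar> \<le> distortion_prod ?n * \<bar>dx_fcomp w l y\<bar>" using Cons w by auto
  ultimately have "\<bar>fx j l ?U\<bar> * \<bar>dx_fcomp w l x\<bar> \<le> (\<bar>fx j l ?V\<bar> * (1 + Kfx * \<gamma>2 ^ ?n * (b - a))) * (distortion_prod ?n * \<bar>dx_fcomp w l y\<bar>)"
    by (intro mult_mono) auto
  then show ?case by (simp add: abs_mult distortion_prod_Suc algebra_simps)
qed

lemma fcomp_diff_upper:
  assumes "set w \<subseteq> {1..m}" "l\<in>S" "x\<in>{a..b}" "y\<in>{a..b}"
  shows "\<bar>fcomp f l w x - fcomp f l w y\<bar> \<le> distortion_prod (length w) * \<bar>dx_fcomp w l y\<bar> * \<bar>x - y\<bar>"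
  using assms
proof (induction w)
  case Nil then show ?case by simp
next
  case (Cons j w)
  have j: "j \<in> {1..m}" and w: "set w \<subseteq> {1..m}" using Cons by auto
  let ?U = "fcomp f l w x" and ?V = "fcomp f l w y" and ?n = "length w"
  have UV1: "?U \<in> {a..b}" "?V \<in> {a..b}" using fcomp_in_X w Cons by auto
  have "\<bar>f j l ?U - f j l ?V\<bar> \<le> \<bar>fx j l ?V\<bar> * (1 + Kfx * \<bar>?U - ?V\<bar>) * \<bar>?U - ?V\<bar>"
    using f_step_upper[OF j Cons(3) UV1] .
  also have "\<dots> \<le> (\<bar>fx j l ?V\<bar> * (1 + Kfx * \<gamma>2 ^ ?n * (b - a))) * (distortion_prod ?n * \<bar>dx_fcomp w l y\<bar> * \<bar>x - y\<bar>)"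
    using fcomp_contracts(2)[OF w Cons(3-5)] Cons w Kfx_pos gm ab
    by (intro mult_mono mult_left_mono) (auto intro!: add_nonneg_nonneg mult_nonneg_nonneg)
  finally show ?case by (simp add: abs_mult distortion_prod_Suc algebra_simps)
qed

lemma fcomp_diff_lower:
  assumes "set w \<subseteq> {1..m}" "l\<in>S" "x\<in>{a..b}" "y\<in>{a..b}"
  shows "\<bar>dx_fcomp w l x\<bar> * \<bar>x - y\<bar> \<le> distortion_prod (length w) * \<bar>fcomp f l w x - fcomp f l w y\<bar>"
  using assms
proof (induction w)
  case Nil then show ?case by simp
next
  case (Cons j w)
  have j: "j \<in> {1..m}" and w: "set w \<subseteq> {1..m}" using Cons by auto
  let ?U = "fcomp f l w x" and ?V = "fcomp f l w y" and ?n = "length w"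
  have UV1: "?U \<in> {a..b}" "?V \<in> {a..b}" using fcomp_in_X w Cons by auto
  have "\<bar>dx_fcomp (j # w) l x\<bar> * \<bar>x - y\<bar> = \<bar>fx j l ?U\<bar> * (\<bar>dx_fcomp w l x\<bar> * \<bar>x - y\<bar>)" by (simp add: abs_mult)
  also have "\<dots> \<le> \<bar>fx j l ?U\<bar> * (distortion_prod ?n * \<bar>?U - ?V\<bar>)" using Cons w by (intro mult_left_mono) auto
  also have "\<dots> = distortion_prod ?n * (\<bar>fx j l ?U\<bar> * \<bar>?U - ?V\<bar>)" by simp
  also have "\<dots> \<le> distortion_prod ?n * ((1 + Kfx * \<bar>?U - ?V\<bar>) * \<bar>f j l ?U - f j l ?V\<bar>)"
    using f_step_lower[OF j Cons(3) UV1] distortion_prod_ge_1 by (intro mult_left_mono) (auto intro: order_trans[OF zero_le_one])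
  also have "\<dots> \<le> distortion_prod ?n * ((1 + Kfx * \<gamma>2 ^ ?n * (b - a)) * \<bar>f j l ?U - f j l ?V\<bar>)"
    using fcomp_contracts(2)[OF w Cons(3-5)] distortion_prod_ge_1 by (intro mult_left_mono mult_right_mono) (auto intro: order_trans[OF zero_le_one])
  finally show ?case by (simp add: distortion_prod_Suc algebra_simps)
qed

lemma geom_sum_Suc_shift: "geom_sum (Suc n) = 1 + \<gamma>2 * geom_sum n"
  by (simp add: geom_sum_def sum.lessThan_Suc_shift sum_distrib_left del: sum.lessThan_Suc)

lemma dx_fcomp_lipschitz:
  assumes "set w \<subseteq> {1..m}" "l\<in>S" "x\<in>{a..b}" "y\<in>{a..b}"
  shows "\<bar>dx_fcomp w l x - dx_fcomp w l y\<bar> \<le> Kfx * Kdist * geom_sum (length w) * \<bar>dx_fcomp w l y\<bar> * \<bar>x - y\<bar>"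
  using assms
proof (induction w)
  case Nil then show ?case by (simp add: geom_sum_def)
next
  case (Cons j w)
  have j: "j \<in> {1..m}" and w: "set w \<subseteq> {1..m}" using Cons by auto
  let ?U = "fcomp f l w x" and ?V = "fcomp f l w y" and ?n = "length w"
  let ?X = "\<bar>x - y\<bar>" and ?By = "\<bar>dx_fcomp w l y\<bar>" and ?FV = "\<bar>fx j l ?V\<bar>"
  have UV1: "?U \<in> {a..b}" "?V \<in> {a..b}" using fcomp_in_X w Cons by auto
  have eq: "dx_fcomp (j#w) l x - dx_fcomp (j#w) l y = (fx j l ?U - fx j l ?V) * dx_fcomp w l x + fx j l ?V * (dx_fcomp w l x - dx_fcomp w l y)"
    by (simp add: algebra_simps)
  have a1: "\<bar>fx j l ?U - fx j l ?V\<bar> \<le> M * (\<gamma>2 ^ ?n * ?X)"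
    using fx_lipschitz[OF j Cons(3) UV1] fcomp_lipschitz[OF w Cons(3-5)] Mp
    by (meson less_imp_le mult_left_mono order_trans)
  have a2: "\<bar>dx_fcomp w l x\<bar> \<le> Kdist * ?By"
    using dx_fcomp_distortion[OF w Cons(3-5)] distortion_prod_le mult_right_mono[of _ Kdist ?By] by (meson abs_ge_zero order_trans)
  have "\<bar>(fx j l ?U - fx j l ?V) * dx_fcomp w l x\<bar> \<le> (M * (\<gamma>2 ^ ?n * ?X)) * (Kdist * ?By)"
    unfolding abs_mult using a1 a2 by (intro mult_mono) auto
  also have "\<dots> \<le> (Kfx * ?FV * (\<gamma>2 ^ ?n * ?X)) * (Kdist * ?By)"
    using M_le_Kfx[OF j Cons(3) UV1(2)] gm Kdist_ge_1 by (intro mult_right_mono) auto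
  finally have t1: "\<bar>(fx j l ?U - fx j l ?V) * dx_fcomp w l x\<bar> \<le> Kfx * Kdist * \<gamma>2 ^ ?n * (?FV * ?By) * ?X"
    by (simp add: algebra_simps)
  have "\<bar>fx j l ?V * (dx_fcomp w l x - dx_fcomp w l y)\<bar> \<le> ?FV * (Kfx * Kdist * geom_sum ?n * ?By * ?X)"
    unfolding abs_mult using Cons w by (intro mult_left_mono) auto
  then have t2: "\<bar>fx j l ?V * (dx_fcomp w l x - dx_fcomp w l y)\<bar> \<le> Kfx * Kdist * geom_sum ?n * (?FV * ?By) * ?X"
    by (simp add: algebra_simps)
  have "\<bar>dx_fcomp (j#w) l x - dx_fcomp (j#w) l y\<bar> \<le> Kfx * Kdist * \<gamma>2 ^ ?n * (?FV * ?By) * ?X + Kfx * Kdist * geom_sum ?n * (?FV * ?By) * ?X"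
    unfolding eq using t1 t2 abs_triangle_ineq[of "(fx j l ?U - fx j l ?V) * dx_fcomp w l x" "fx j l ?V * (dx_fcomp w l x - dx_fcomp w l y)"]
    by linarith
  also have "\<dots> = Kfx * Kdist * geom_sum (length (j#w)) * \<bar>dx_fcomp (j#w) l y\<bar> * ?X"
    by (simp add: geom_sum_Suc abs_mult algebra_simps)
  finally show ?case .
qed

lemma norm_dlam_fcomp_le:
  assumes "set w \<subseteq> {1..m}" "l\<in>S" "x\<in>{a..b}"
  shows "norm (dlam_fcomp w l x) \<le> Lproj"
proof -
  have "norm (dlam_fcomp w l x) \<le> M * geom_sum (length w)"
    using assms
  proof (induction w)
    case Nil then show ?case by (simp add: geom_sum_def)
  next
    case (Cons j w)
    have j: "j \<in> {1..m}" and w: "set w \<subseteq> {1..m}" using Cons by auto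
    have U: "fcomp f l w x \<in> {a..b}" using fcomp_in_X w Cons by auto
    have "norm (dlam_fcomp (j#w) l x) \<le> norm (fl j l (fcomp f l w x)) + \<bar>fx j l (fcomp f l w x)\<bar> * norm (dlam_fcomp w l x)"
      using norm_triangle_ineq[of "fl j l (fcomp f l w x)" "fx j l (fcomp f l w x) *\<^sub>R dlam_fcomp w l x"] by simp
    also have "\<dots> \<le> M + \<gamma>2 * (M * geom_sum (length w))"
      using bnd[OF j Cons(3) U] bfx[OF j Cons(3) U] Cons w by (intro add_mono mult_mono) auto
    finally show ?case by (simp add: geom_sum_Suc_shift algebra_simps)
  qed
  also have "\<dots> \<le> M * (1 / (1 - \<gamma>2))" using geom_sum_le Mp by (intro mult_left_mono) auto
  finally show ?thesis by (simp add: Lproj_def)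
qed

definition "Cdlam = Kfx * Kdist * (1 + Lproj)"

lemma dlam_fcomp_lipschitz:
  assumes "set w \<subseteq> {1..m}" "l\<in>S" "x\<in>{a..b}" "y\<in>{a..b}"
  shows "norm (dlam_fcomp w l x - dlam_fcomp w l y) \<le> Cdlam * length w * \<bar>dx_fcomp w l y\<bar> * \<bar>x - y\<bar>"
  using assms
proof (induction w)
  case Nil then show ?case by simp
next
  case (Cons j w)
  have j: "j \<in> {1..m}" and w: "set w \<subseteq> {1..m}" using Cons by auto
  let ?U = "fcomp f l w x" and ?V = "fcomp f l w y" and ?n = "length w"
  let ?X = "\<bar>x - y\<bar>" and ?By = "\<bar>dx_fcomp w l y\<bar>" and ?FV = "\<bar>fx j l ?V\<bar>"
  have UV1: "?U \<in> {a..b}" "?V \<in> {a..b}" using fcomp_in_X w Cons by auto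
  have eq: "dlam_fcomp (j#w) l x - dlam_fcomp (j#w) l y = (fl j l ?U - fl j l ?V) + (fx j l ?U - fx j l ?V) *\<^sub>R dlam_fcomp w l x
      + fx j l ?V *\<^sub>R (dlam_fcomp w l x - dlam_fcomp w l y)"
    by (simp add: algebra_simps)
  have uv: "\<bar>?U - ?V\<bar> \<le> Kdist * ?By * ?X"
  proof -
    have "distortion_prod ?n * (?By * ?X) \<le> Kdist * (?By * ?X)" by (rule mult_right_mono[OF distortion_prod_le]) simp
    then show ?thesis using fcomp_diff_upper[OF w Cons(3-5)] by (simp add: mult.assoc)
  qed
  have MK: "M * (Kdist * ?By * ?X) * (1 + Lproj) \<le> Cdlam * (?FV * ?By) * ?X"
  proof -
    have "M * (Kdist * ?By * ?X) * (1 + Lproj) \<le> (Kfx * ?FV) * (Kdist * ?By * ?X) * (1 + Lproj)"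
      using M_le_Kfx[OF j Cons(3) UV1(2)] Lproj_pos Kdist_ge_1 by (intro mult_right_mono) auto
    then show ?thesis by (simp add: Cdlam_def algebra_simps)
  qed
  have t1: "norm (fl j l ?U - fl j l ?V) \<le> M * (Kdist * ?By * ?X)"
    using fl_lipschitz[OF j Cons(3) UV1] uv Mp by (meson less_imp_le mult_left_mono order_trans)
  have t2: "norm ((fx j l ?U - fx j l ?V) *\<^sub>R dlam_fcomp w l x) \<le> (M * (Kdist * ?By * ?X)) * Lproj"
  proof -
    have "\<bar>fx j l ?U - fx j l ?V\<bar> \<le> M * (Kdist * ?By * ?X)"
      using fx_lipschitz[OF j Cons(3) UV1] uv Mp by (meson less_imp_le mult_left_mono order_trans)
    then show ?thesis using norm_dlam_fcomp_le[OF w Cons(3,4)] by (simp add: mult_mono)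
  qed
  have t3: "norm (fx j l ?V *\<^sub>R (dlam_fcomp w l x - dlam_fcomp w l y)) \<le> Cdlam * ?n * (?FV * ?By) * ?X"
  proof -
    have "norm (fx j l ?V *\<^sub>R (dlam_fcomp w l x - dlam_fcomp w l y)) \<le> ?FV * (Cdlam * ?n * ?By * ?X)"
      using Cons w by (simp add: mult_left_mono)
    then show ?thesis by (simp add: algebra_simps)
  qed
  have "norm (dlam_fcomp (j#w) l x - dlam_fcomp (j#w) l y) \<le> M * (Kdist * ?By * ?X) + (M * (Kdist * ?By * ?X)) * Lproj + Cdlam * ?n * (?FV * ?By) * ?X"
    unfolding eq using t1 t2 t3 norm_triangle_ineq[of "(fl j l ?U - fl j l ?V) + (fx j l ?U - fx j l ?V) *\<^sub>R dlam_fcomp w l x"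
      "fx j l ?V *\<^sub>R (dlam_fcomp w l x - dlam_fcomp w l y)"]
      norm_triangle_ineq[of "fl j l ?U - fl j l ?V" "(fx j l ?U - fx j l ?V) *\<^sub>R dlam_fcomp w l x"] by linarith
  also have "\<dots> = M * (Kdist * ?By * ?X) * (1 + Lproj) + Cdlam * ?n * (?FV * ?By) * ?X" by (simp add: algebra_simps)
  also have "\<dots> \<le> Cdlam * (?FV * ?By) * ?X + Cdlam * ?n * (?FV * ?By) * ?X" using MK by linarith
  also have "\<dots> = Cdlam * length (j#w) * \<bar>dx_fcomp (j#w) l y\<bar> * ?X" by (simp add: abs_mult algebra_simps)
  finally show ?case .
qed

lemma fcomp_lipschitz_lam:
  assumes "set w \<subseteq> {1..m}" "l\<in>S" "\<mu>\<in>S" "x\<in>{a..b}"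
  shows "\<bar>fcomp f \<mu> w x - fcomp f l w x\<bar> \<le> Lproj * norm (\<mu> - l)"
proof -
  have "\<bar>fcomp f \<mu> w x - fcomp f l w x\<bar> \<le> M * norm (\<mu> - l) * geom_sum (length w)"
    using assms
  proof (induction w)
    case Nil then show ?case by (simp add: geom_sum_def)
  next
    case (Cons j w)
    have j: "j \<in> {1..m}" and w: "set w \<subseteq> {1..m}" using Cons by auto
    let ?U = "fcomp f l w x" and ?U' = "fcomp f \<mu> w x"
    have U: "?U \<in> {a..b}" "?U' \<in> {a..b}" using fcomp_in_X w Cons by auto
    have "\<bar>f j \<mu> ?U' - f j l ?U\<bar> \<le> \<bar>f j \<mu> ?U' - f j l ?U'\<bar> + \<bar>f j l ?U' - f j l ?U\<bar>" by arith
    also have "\<dots> \<le> M * norm (\<mu> - l) + \<gamma>2 * (M * norm (\<mu> - l) * geom_sum (length w))"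
      using f_lipschitz_lam[OF j Cons(4,3) U(2)] f_lipschitz_x[OF j Cons(3) U(2,1)] Cons w gm
      by (smt (verit, best) mult_left_mono)
    finally show ?case by (simp add: geom_sum_Suc_shift algebra_simps)
  qed
  also have "\<dots> \<le> M * norm (\<mu> - l) * (1 / (1 - \<gamma>2))" using geom_sum_le Mp by (intro mult_left_mono) auto
  finally show ?thesis by (simp add: Lproj_def)
qed

lemma dx_fcomp_lam:
  assumes "set w \<subseteq> {1..m}" "l\<in>S" "\<mu>\<in>S" "x\<in>{a..b}"
  shows "\<bar>dx_fcomp w l x\<bar> \<le> (1 + Kfx * (norm (\<mu> - l) powr \<delta> + Lproj * norm (\<mu> - l))) ^ length w * \<bar>dx_fcomp w \<mu> x\<bar>"
  using assms
proof (induction w)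
  case Nil then show ?case by simp
next
  case (Cons j w)
  have j: "j \<in> {1..m}" and w: "set w \<subseteq> {1..m}" using Cons by auto
  let ?U = "fcomp f l w x" and ?U' = "fcomp f \<mu> w x" and ?t = "norm (\<mu> - l) powr \<delta> + Lproj * norm (\<mu> - l)"
  have U: "?U \<in> {a..b}" "?U' \<in> {a..b}" using fcomp_in_X w Cons by auto
  have t0: "0 \<le> ?t" using Lproj_pos by simp
  have h1: "\<bar>fx j l ?U - fx j \<mu> ?U\<bar> \<le> M * norm (\<mu> - l) powr \<delta>"
    using hfx[OF j Cons(3,4) U(1)] by (simp add: norm_minus_commute)
  have h2: "\<bar>fx j \<mu> ?U - fx j \<mu> ?U'\<bar> \<le> M * (Lproj * norm (\<mu> - l))"
  proof -
    have "\<bar>?U - ?U'\<bar> \<le> Lproj * norm (\<mu> - l)" using fcomp_lipschitz_lam[OF w Cons(3,4,5)] by (simp add: abs_minus_commute)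
    then have "M * \<bar>?U - ?U'\<bar> \<le> M * (Lproj * norm (\<mu> - l))" using Mp by (intro mult_left_mono) auto
    then show ?thesis using fx_lipschitz[OF j Cons(4) U] by linarith
  qed
  have "\<bar>fx j l ?U\<bar> \<le> \<bar>fx j \<mu> ?U'\<bar> + M * ?t" using h1 h2 by (simp add: algebra_simps)
  also have "\<dots> \<le> \<bar>fx j \<mu> ?U'\<bar> + Kfx * \<bar>fx j \<mu> ?U'\<bar> * ?t"
    using M_le_Kfx[OF j Cons(4) U(2)] t0 by (intro add_left_mono mult_right_mono) auto
  finally have s: "\<bar>fx j l ?U\<bar> \<le> (1 + Kfx * ?t) * \<bar>fx j \<mu> ?U'\<bar>" by (simp add: algebra_simps)
  have ih: "\<bar>dx_fcomp w l x\<bar> \<le> (1 + Kfx * ?t) ^ length w * \<bar>dx_fcomp w \<mu> x\<bar>" using Cons w by auto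
  have "\<bar>fx j l ?U\<bar> * \<bar>dx_fcomp w l x\<bar> \<le> ((1 + Kfx * ?t) * \<bar>fx j \<mu> ?U'\<bar>) * ((1 + Kfx * ?t) ^ length w * \<bar>dx_fcomp w \<mu> x\<bar>)"
    using s ih by (intro mult_mono) auto
  then show ?case by (simp add: abs_mult algebra_simps)
qed

lemma proj_grad_unfold_pref:
  assumes "\<omega> \<in> seqs m" "l \<in> S"
  shows "proj_grad l \<omega> = dlam_fcomp (pref \<omega> k) l (proj f a l (seq_drop k \<omega>)) + dx_fcomp (pref \<omega> k) l (proj f a l (seq_drop k \<omega>)) *\<^sub>R proj_grad l (seq_drop k \<omega>)"
  using assms(1)
proof (induction k arbitrary: \<omega>)
  case 0 then show ?case by simp
next
  case (Suc k)
  let ?x = "proj f a l (seq_drop k (seq_tl \<omega>))" and ?w = "pref (seq_tl \<omega>) k"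
  have p: "proj f a l (seq_tl \<omega>) = fcomp f l ?w ?x" using proj_unfold_pref[OF seq_tl_in_seqs[OF Suc.prems] assms(2)] .
  have "proj_grad l \<omega> = fl (\<omega> 0) l (proj f a l (seq_tl \<omega>)) + fx (\<omega> 0) l (proj f a l (seq_tl \<omega>)) *\<^sub>R proj_grad l (seq_tl \<omega>)"
    using proj_grad_unfold[OF Suc.prems assms(2)] .
  also have "proj_grad l (seq_tl \<omega>) = dlam_fcomp ?w l ?x + dx_fcomp ?w l ?x *\<^sub>R proj_grad l (seq_drop k (seq_tl \<omega>))"
    using Suc.IH[OF seq_tl_in_seqs[OF Suc.prems]] .
  finally show ?case unfolding p by (simp add: pref_Suc seq_drop_Suc algebra_simps)
qed

lemma
  assumes "\<omega> \<noteq> \<tau>" "set w \<subseteq> {1..m}" "common \<omega> \<tau> = w" "l0 \<in> S" "y \<in> {a..b}"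
  shows dsym_le_dx_fcomp: "dsym f {a..b} l0 \<omega> \<tau> \<le> Kdist * Kdist * (b - a) * \<bar>dx_fcomp w l0 y\<bar>"
    and dsym_le_power: "dsym f {a..b} l0 \<omega> \<tau> \<le> \<gamma>2 ^ length w * (b - a)"
    and dsym_nonneg: "0 \<le> dsym f {a..b} l0 \<omega> \<tau>"
proof -
  have d: "dsym f {a..b} l0 \<omega> \<tau> = diameter (fcomp f l0 w ` {a..b})"
    using assms by (simp add: dsym_def)
  have bd: "bounded (fcomp f l0 w ` {a..b})"
    by (rule bounded_subset[OF bounded_closed_interval[of a b]]) (use fcomp_in_X assms in auto)
  show "0 \<le> dsym f {a..b} l0 \<omega> \<tau>" unfolding d by (rule diameter_ge_0[OF bd])
  show "dsym f {a..b} l0 \<omega> \<tau> \<le> Kdist * Kdist * (b - a) * \<bar>dx_fcomp w l0 y\<bar>"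
    unfolding d
  proof (rule diameter_le)
    fix s t assume "s \<in> fcomp f l0 w ` {a..b}" "t \<in> fcomp f l0 w ` {a..b}"
    then obtain u v where uv: "u \<in> {a..b}" "v \<in> {a..b}" "s = fcomp f l0 w u" "t = fcomp f l0 w v" by auto
    have "\<bar>s - t\<bar> \<le> distortion_prod (length w) * \<bar>dx_fcomp w l0 v\<bar> * \<bar>u - v\<bar>" using fcomp_diff_upper[OF assms(2,4) uv(1,2)] uv by simp
    also have "\<dots> \<le> Kdist * (Kdist * \<bar>dx_fcomp w l0 y\<bar>) * (b - a)"
    proof (intro mult_mono)
      show "distortion_prod (length w) \<le> Kdist" by (rule distortion_prod_le)
      show "\<bar>dx_fcomp w l0 v\<bar> \<le> Kdist * \<bar>dx_fcomp w l0 y\<bar>"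
        using dx_fcomp_distortion[OF assms(2,4) uv(2) assms(5)] distortion_prod_le[of "length w"] mult_right_mono[of _ Kdist "\<bar>dx_fcomp w l0 y\<bar>"]
        by (meson abs_ge_zero order_trans)
      show "\<bar>u - v\<bar> \<le> b - a" using uv by auto
    qed (use Kdist_ge_1 in auto)
    finally show "norm (s - t) \<le> Kdist * Kdist * (b - a) * \<bar>dx_fcomp w l0 y\<bar>" by (simp add: algebra_simps)
  qed (use ab in simp)
  show "dsym f {a..b} l0 \<omega> \<tau> \<le> \<gamma>2 ^ length w * (b - a)"
    unfolding d
  proof (rule diameter_le)
    fix s t assume "s \<in> fcomp f l0 w ` {a..b}" "t \<in> fcomp f l0 w ` {a..b}"
    then obtain u v where uv: "u \<in> {a..b}" "v \<in> {a..b}" "s = fcomp f l0 w u" "t = fcomp f l0 w v" by auto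
    show "norm (s - t) \<le> \<gamma>2 ^ length w * (b - a)" using fcomp_contracts(1)[OF assms(2,4) uv(1,2)] uv by simp
  qed (use ab in simp)
qed

lemma proj_diff_has_real_derivative_line:
  assumes "\<omega> \<in> seqs m" "\<tau> \<in> seqs m" "x + t *\<^sub>R e \<in> interior S"
  shows "((\<lambda>s. proj f a (x + s *\<^sub>R e) \<omega> - proj f a (x + s *\<^sub>R e) \<tau>) has_real_derivative
     ((proj_grad (x + t *\<^sub>R e) \<omega> - proj_grad (x + t *\<^sub>R e) \<tau>) \<bullet> e)) (at t)"
proof -
  let ?L = "x + t *\<^sub>R e" and ?g = "proj_grad (x + t *\<^sub>R e) \<omega> - proj_grad (x + t *\<^sub>R e) \<tau>"
  have L: "?L \<in> S" using assms(3) interior_subset by blast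
  have outer: "((\<lambda>\<mu>. proj f a \<mu> \<omega> - proj f a \<mu> \<tau>) has_derivative (\<lambda>h. ?g \<bullet> h)) (at ?L)"
    using has_derivative_diff[OF proj_has_derivative[OF assms(1) L] proj_has_derivative[OF assms(2) L]]
    unfolding at_within_interior[OF assms(3)] by (simp add: inner_diff_left)
  have inner: "((\<lambda>s. x + s *\<^sub>R e) has_derivative (\<lambda>h. h *\<^sub>R e)) (at t)"
    by (auto intro!: derivative_eq_intros)
  have "((\<lambda>s. proj f a (x + s *\<^sub>R e) \<omega> - proj f a (x + s *\<^sub>R e) \<tau>) has_derivative
      (\<lambda>h. ?g \<bullet> (h *\<^sub>R e))) (at t)"
    using diff_chain_at[OF inner outer] by (simp add: o_def)
  then show ?thesis
    unfolding has_field_derivative_def by (rule has_derivative_eq_rhs) (simp add: fun_eq_iff)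
qed

lemma transversal_proj_grad:
  assumes l: "l \<in> interior S" and \<omega>: "\<omega> \<in> seqs m" and \<tau>: "\<tau> \<in> seqs m"
    and g: "((\<lambda>\<mu>. proj f a \<mu> \<omega> - proj f a \<mu> \<tau>) has_derivative (\<lambda>h. g \<bullet> h)) (at l within S)"
  shows "g = proj_grad l \<omega> - proj_grad l \<tau>"
proof -
  have lS: "l \<in> S" using l interior_subset by blast
  have "((\<lambda>\<mu>. proj f a \<mu> \<omega> - proj f a \<mu> \<tau>) has_derivative
      (\<lambda>h. (proj_grad l \<omega> - proj_grad l \<tau>) \<bullet> h)) (at l)"
    using has_derivative_diff[OF proj_has_derivative[OF \<omega> lS] proj_has_derivative[OF \<tau> lS]]
    unfolding at_within_interior[OF l] by (simp add: inner_diff_left)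
  moreover have "((\<lambda>\<mu>. proj f a \<mu> \<omega> - proj f a \<mu> \<tau>) has_derivative (\<lambda>h. g \<bullet> h)) (at l)"
    using g unfolding at_within_interior[OF l] .
  ultimately have "(\<lambda>h. g \<bullet> h) = (\<lambda>h. (proj_grad l \<omega> - proj_grad l \<tau>) \<bullet> h)"
    by (intro has_derivative_unique)
  then have "g \<bullet> (g - (proj_grad l \<omega> - proj_grad l \<tau>)) = (proj_grad l \<omega> - proj_grad l \<tau>) \<bullet> (g - (proj_grad l \<omega> - proj_grad l \<tau>))"
    by metis
  then have "(g - (proj_grad l \<omega> - proj_grad l \<tau>)) \<bullet> (g - (proj_grad l \<omega> - proj_grad l \<tau>)) = 0"
    by (simp add: inner_diff_left)
  then show ?thesis by simp
qed

end

locale ifs_transversal = ifs +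
  fixes l0 :: 'a and r \<eta> \<beta> :: real
  assumes r: "0 < r" "ball l0 r \<subseteq> S" and \<eta>: "0 < \<eta>" and \<beta>: "0 < \<beta>"
    and transversal: "\<And>l \<omega> \<tau>. l \<in> S \<Longrightarrow> \<omega> \<in> seqs m \<Longrightarrow> \<tau> \<in> seqs m \<Longrightarrow> \<omega> 0 \<noteq> \<tau> 0 \<Longrightarrow>
      \<bar>proj f a l \<omega> - proj f a l \<tau>\<bar> < \<eta> \<Longrightarrow>
      \<exists>g. ((\<lambda>\<mu>. proj f a \<mu> \<omega> - proj f a \<mu> \<tau>) has_derivative (\<lambda>h. g \<bullet> h)) (at l within S) \<and> \<eta> \<le> norm g"
begin

text \<open>Splitting \<open>d\<^sup>1\<^sup>+\<^sup>\<beta> = d \<cdot> d\<^sup>\<beta>\<^sup>/\<^sup>2 \<cdot> d\<^sup>\<beta>\<^sup>/\<^sup>2\<close>, one factor \<open>d\<^sup>\<beta>\<^sup>/\<^sup>2 \<le> q\<^sup>k ba\<close> absorbs the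
  distortion along the common prefix, the other one is made small by the choice of \<open>c\<beta>\<close>.\<close>
definition "q = \<gamma>2 powr (\<beta> / 2)"
definition "ba = (b - a) powr (\<beta> / 2)"
definition "Q = Kdist * Kdist * (b - a) * ba"
definition "Ctail = Kfx * Kdist * Lproj / (1 - \<gamma>2)"
definition "E0 = (Cdlam / (1 - q) + Ctail + 1) * Kdist * Q * ba"
definition "c\<beta> = min (\<eta> / (4 * E0)) (\<eta> / (2 * Q * ba))"
definition "\<epsilon>\<beta> = min r (min ((\<eta> / (8 * Chol)) powr (1 / \<delta>) / 2)
   (min (((1 / q - 1) / (2 * Kfx)) powr (1 / \<delta>)) ((1 / q - 1) / (2 * Kfx * Lproj))))"

lemma l0_in_S: "l0 \<in> S" using r by auto

lemma q_pos: "0 < q" and q_less_1: "q < 1"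
  using gm \<beta> powr01_less_one[of \<gamma>2 "\<beta> / 2"] by (auto simp: q_def)

lemma ba_pos: "0 < ba" using ab by (simp add: ba_def)

lemma Q_pos: "0 < Q" using Kdist_ge_1 ab ba_pos by (simp add: Q_def)

lemma Ctail_nonneg: "0 \<le> Ctail" using Kfx_pos Kdist_ge_1 Lproj_pos gm by (simp add: Ctail_def)

lemma Cdlam_nonneg: "0 \<le> Cdlam" using Kfx_pos Kdist_ge_1 Lproj_pos by (simp add: Cdlam_def)

lemma E0_pos: "0 < E0"
  using Cdlam_nonneg Ctail_nonneg q_less_1 Kdist_ge_1 Q_pos ba_pos unfolding E0_def
  by (intro mult_pos_pos add_nonneg_pos) auto

lemma c\<beta>_pos: "0 < c\<beta>" using \<eta> E0_pos Q_pos ba_pos by (simp add: c\<beta>_def)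

lemma c\<beta>_E0_le: "c\<beta> * E0 \<le> \<eta> / 4"
proof -
  have "c\<beta> \<le> \<eta> / (4 * E0)" by (simp add: c\<beta>_def)
  then show ?thesis using E0_pos by (simp add: field_simps)
qed

lemma c\<beta>_ba_le: "c\<beta> * ba \<le> \<eta> / (2 * Q)"
proof -
  have "c\<beta> \<le> \<eta> / (2 * Q * ba)" by (simp add: c\<beta>_def)
  then show ?thesis using Q_pos ba_pos by (simp add: field_simps)
qed

lemma \<epsilon>\<beta>_pos: "0 < \<epsilon>\<beta>"
proof -
  have "0 < 1 / q - 1" using q_pos q_less_1 by simp
  then show ?thesis
    using r \<eta> Kfx_pos Lproj_pos Chol_pos unfolding \<epsilon>\<beta>_def by auto
qed

lemma ball_\<epsilon>\<beta>_subset_ball: "ball l0 \<epsilon>\<beta> \<subseteq> ball l0 r"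
  by (intro subset_ball) (simp add: \<epsilon>\<beta>_def)

lemma ball_\<epsilon>\<beta>_subset_interior: "ball l0 \<epsilon>\<beta> \<subseteq> interior S"
proof -
  have "ball l0 r \<subseteq> interior S" using r by (intro interior_maximal) auto
  then show ?thesis using ball_\<epsilon>\<beta>_subset_ball by blast
qed

lemma ball_\<epsilon>\<beta>_subset: "ball l0 \<epsilon>\<beta> \<subseteq> S"
  using ball_\<epsilon>\<beta>_subset_interior interior_subset by blast

lemma proj_grad_close:
  assumes "\<omega> \<in> seqs m" "z \<in> ball l0 \<epsilon>\<beta>" "z' \<in> ball l0 \<epsilon>\<beta>"
  shows "norm (proj_grad z \<omega> - proj_grad z' \<omega>) \<le> \<eta> / 8"
proof -
  define e1 where "e1 = (\<eta> / (8 * Chol)) powr (1 / \<delta>) / 2"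
  have e1: "(2 * e1) powr \<delta> = \<eta> / (8 * Chol)" using \<eta> Chol_pos dl by (simp add: e1_def powr_powr)
  have "norm (z - z') \<le> dist z l0 + dist l0 z'" using dist_triangle[of z z' l0] by (simp add: dist_norm)
  also have "\<dots> \<le> 2 * e1" using assms(2,3) by (auto simp: dist_commute \<epsilon>\<beta>_def e1_def)
  finally have "norm (z - z') powr \<delta> \<le> \<eta> / (8 * Chol)" unfolding e1[symmetric] using dl by (intro powr_mono2) auto
  then have "Chol * norm (z - z') powr \<delta> \<le> \<eta> / 8" using Chol_pos by (simp add: field_simps)
  moreover have "z \<in> S" "z' \<in> S" using assms ball_\<epsilon>\<beta>_subset by auto
  ultimately show ?thesis using proj_grad_hoelder[OF assms(1), of z' z] by simp
qed

lemma distortion_q_le_1: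
  assumes "z \<in> ball l0 \<epsilon>\<beta>"
  shows "(1 + Kfx * (norm (z - l0) powr \<delta> + Lproj * norm (z - l0))) * q \<le> 1"
proof -
  define s where "s = 1 / q - 1"
  have s: "0 < s" "(1 + s) * q = 1" using q_pos q_less_1 by (auto simp: s_def field_simps)
  have n: "norm (z - l0) \<le> \<epsilon>\<beta>" using assms by (simp add: dist_norm norm_minus_commute)
  have "norm (z - l0) powr \<delta> \<le> ((s / (2 * Kfx)) powr (1 / \<delta>)) powr \<delta>"
    using n dl by (intro powr_mono2) (auto simp: \<epsilon>\<beta>_def s_def)
  also have "\<dots> = s / (2 * Kfx)" using s Kfx_pos dl by (simp add: powr_powr)
  finally have 1: "norm (z - l0) powr \<delta> \<le> s / (2 * Kfx)" .
  have "Lproj * norm (z - l0) \<le> Lproj * (s / (2 * Kfx * Lproj))"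
    using n Lproj_pos by (intro mult_left_mono) (auto simp: \<epsilon>\<beta>_def s_def)
  then have 2: "Lproj * norm (z - l0) \<le> s / (2 * Kfx)" using Lproj_pos by simp
  have "Kfx * (norm (z - l0) powr \<delta> + Lproj * norm (z - l0)) \<le> Kfx * (s / Kfx)"
    using 1 2 Kfx_pos by (intro mult_left_mono) auto
  then have "Kfx * (norm (z - l0) powr \<delta> + Lproj * norm (z - l0)) \<le> s" using Kfx_pos by simp
  then have "(1 + Kfx * (norm (z - l0) powr \<delta> + Lproj * norm (z - l0))) * q \<le> (1 + s) * q"
    using q_pos by (intro mult_right_mono) auto
  then show ?thesis using s by simp
qed

end

locale ifs_pair = ifs_transversal +
  fixes \<omega> \<tau> :: "nat \<Rightarrow> nat"
  assumes \<omega>: "\<omega> \<in> seqs m" and \<tau>: "\<tau> \<in> seqs m" and ne: "\<omega> \<noteq> \<tau>"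
begin

definition "k = (LEAST n. \<omega> n \<noteq> \<tau> n)"
definition "d = dsym f {a..b} l0 \<omega> \<tau>"
definition "u = d powr (\<beta> / 2)"

abbreviation "w \<equiv> pref \<omega> k"
abbreviation "\<omega>' \<equiv> seq_drop k \<omega>"
abbreviation "\<tau>' \<equiv> seq_drop k \<tau>"
abbreviation x1 :: "'a \<Rightarrow> real" where "x1 z \<equiv> proj f a z \<omega>'"
abbreviation x2 :: "'a \<Rightarrow> real" where "x2 z \<equiv> proj f a z \<tau>'"
abbreviation D :: "'a \<Rightarrow> real" where "D z \<equiv> proj f a z \<omega> - proj f a z \<tau>"
abbreviation H :: "'a \<Rightarrow> 'a" where "H z \<equiv> proj_grad z \<omega>' - proj_grad z \<tau>'"

lemma tails_differ: "\<omega>' 0 \<noteq> \<tau>' 0" and pref_\<tau>: "pref \<tau> k = w" and common_eq: "common \<omega> \<tau> = w"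
  using first_difference[OF ne] by (simp_all add: k_def)

lemma w_letters: "set w \<subseteq> {1..m}" using set_pref_seqs[OF \<omega>] .

lemma tails_in_seqs: "\<omega>' \<in> seqs m" "\<tau>' \<in> seqs m" using seq_drop_in_seqs \<omega> \<tau> by auto

lemma tails_in_X: "z \<in> S \<Longrightarrow> x1 z \<in> {a..b}" "z \<in> S \<Longrightarrow> x2 z \<in> {a..b}"
  using proj_in_X tails_in_seqs by auto

lemma proj_diff_eq: "z \<in> S \<Longrightarrow> D z = fcomp f z w (x1 z) - fcomp f z w (x2 z)"
  using proj_unfold_pref[OF \<omega>, of z k] proj_unfold_pref[OF \<tau>, of z k] pref_\<tau> by simp

lemma proj_grad_diff_eq:
  "z \<in> S \<Longrightarrow> proj_grad z \<omega> - proj_grad z \<tau> = (dlam_fcomp w z (x1 z) - dlam_fcomp w z (x2 z))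
     + dx_fcomp w z (x1 z) *\<^sub>R H z + (dx_fcomp w z (x1 z) - dx_fcomp w z (x2 z)) *\<^sub>R proj_grad z \<tau>'"
  using proj_grad_unfold_pref[OF \<omega>, of z k] proj_grad_unfold_pref[OF \<tau>, of z k] pref_\<tau>
  by (simp add: algebra_simps)

lemma d_nonneg: "0 \<le> d" and d_le_power: "d \<le> \<gamma>2 ^ k * (b - a)"
  using dsym_le_power[OF ne w_letters common_eq l0_in_S, of a] dsym_nonneg[OF ne w_letters common_eq l0_in_S, of a] ab
  by (auto simp: d_def)

lemma d_powr: "d powr (1 + \<beta>) = d * u * u"
proof -
  have "d powr (1 + \<beta>) = d powr (1 + \<beta> / 2 + \<beta> / 2)" by (simp add: add.commute)
  also have "\<dots> = d powr 1 * d powr (\<beta> / 2) * d powr (\<beta> / 2)" by (simp only: powr_add)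
  finally show ?thesis using d_nonneg by (simp add: u_def)
qed

lemma u_le: "u \<le> q ^ k * ba"
proof -
  have "u \<le> (\<gamma>2 ^ k * (b - a)) powr (\<beta> / 2)"
    unfolding u_def using d_le_power d_nonneg \<beta> by (intro powr_mono2) auto
  also have "\<dots> = q ^ k * ba" using gm ab by (simp add: powr_mult q_def ba_def powr_power_commute)
  finally show ?thesis .
qed

lemma u_le_ba: "u \<le> ba"
proof -
  have "q ^ k * ba \<le> 1 * ba" using q_pos q_less_1 ba_pos by (intro mult_right_mono) (auto simp: power_le_one)
  then show ?thesis using u_le by simp
qed

lemma d_mult_u_le:
  assumes z: "z \<in> ball l0 \<epsilon>\<beta>" and y: "y \<in> {a..b}"
  shows "d * u \<le> Q * \<bar>dx_fcomp w z y\<bar>"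
proof -
  define \<theta> where "\<theta> = Kfx * (norm (z - l0) powr \<delta> + Lproj * norm (z - l0))"
  have zS: "z \<in> S" using z ball_\<epsilon>\<beta>_subset by blast
  have K: "0 \<le> Kdist * Kdist * (b - a)" using Kdist_ge_1 ab by simp
  have "(1 + \<theta>) ^ k * q ^ k = ((1 + \<theta>) * q) ^ k" by (simp add: power_mult_distrib)
  also have "\<dots> \<le> 1"
    using distortion_q_le_1[OF z] Kfx_pos Lproj_pos q_pos by (intro power_le_one) (auto simp: \<theta>_def)
  finally have \<theta>q: "(1 + \<theta>) ^ k * q ^ k \<le> 1" .
  have "d * q ^ k \<le> (Kdist * Kdist * (b - a) * \<bar>dx_fcomp w l0 y\<bar>) * q ^ k"
    using dsym_le_dx_fcomp[OF ne w_letters common_eq l0_in_S y] q_pos by (intro mult_right_mono) (auto simp: d_def)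
  also have "\<dots> \<le> (Kdist * Kdist * (b - a) * ((1 + \<theta>) ^ k * \<bar>dx_fcomp w z y\<bar>)) * q ^ k"
    using dx_fcomp_lam[OF w_letters l0_in_S zS y] K q_pos by (intro mult_right_mono mult_left_mono) (auto simp: \<theta>_def)
  also have "\<dots> = Kdist * Kdist * (b - a) * \<bar>dx_fcomp w z y\<bar> * ((1 + \<theta>) ^ k * q ^ k)"
    by (simp add: algebra_simps)
  also have "\<dots> \<le> Kdist * Kdist * (b - a) * \<bar>dx_fcomp w z y\<bar>"
    using \<theta>q K by (intro mult_left_le) auto
  finally have "d * q ^ k \<le> Kdist * Kdist * (b - a) * \<bar>dx_fcomp w z y\<bar>" .
  then have "d * (q ^ k * ba) \<le> Kdist * Kdist * (b - a) * \<bar>dx_fcomp w z y\<bar> * ba"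
    using ba_pos by (simp add: mult.assoc[symmetric] mult_right_mono)
  moreover have "d * u \<le> d * (q ^ k * ba)" using u_le d_nonneg by (intro mult_left_mono)
  ultimately show ?thesis by (simp add: Q_def algebra_simps)
qed

lemma d_pos: "\<bar>D z\<bar> < c\<beta> * d powr (1 + \<beta>) \<Longrightarrow> 0 < d"
  using d_nonneg by (cases "d = 0") auto

lemma tail_gap_le:
  assumes z: "z \<in> ball l0 \<epsilon>\<beta>" and small: "\<bar>D z\<bar> < c\<beta> * d powr (1 + \<beta>)"
  shows "(Cdlam * k + Ctail + 1) * \<bar>x1 z - x2 z\<bar> \<le> \<eta> / 4"
proof -
  have zS: "z \<in> S" using z ball_\<epsilon>\<beta>_subset by blast
  note X = tails_in_X[OF zS]
  have dpos: "0 < d" using d_pos[OF small] .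
  have upos: "0 < u" using dpos by (simp add: u_def)
  have "\<bar>dx_fcomp w z (x1 z)\<bar> * \<bar>x1 z - x2 z\<bar> \<le> distortion_prod k * \<bar>D z\<bar>"
    using fcomp_diff_lower[OF w_letters zS X] proj_diff_eq[OF zS] by simp
  also have "\<dots> \<le> Kdist * \<bar>D z\<bar>" by (intro mult_right_mono distortion_prod_le) auto
  finally have lower: "\<bar>dx_fcomp w z (x1 z)\<bar> * \<bar>x1 z - x2 z\<bar> \<le> Kdist * \<bar>D z\<bar>" .
  have "(d * u) * \<bar>x1 z - x2 z\<bar> \<le> Q * \<bar>dx_fcomp w z (x1 z)\<bar> * \<bar>x1 z - x2 z\<bar>"
    using d_mult_u_le[OF z X(1)] by (intro mult_right_mono) auto
  also have "\<dots> \<le> Q * (Kdist * \<bar>D z\<bar>)" using lower Q_pos by (simp add: mult.assoc mult_left_mono)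
  also have "\<dots> \<le> Q * (Kdist * (c\<beta> * (d * u * u)))"
    using small d_powr Q_pos Kdist_ge_1 by (intro mult_left_mono) auto
  also have "\<dots> = (d * u) * (Q * Kdist * c\<beta> * u)" by (simp add: algebra_simps)
  finally have gap: "\<bar>x1 z - x2 z\<bar> \<le> Q * Kdist * c\<beta> * u"
    using dpos upos by (simp add: mult_le_cancel_left_pos)
  have "(Cdlam * k + Ctail + 1) * \<bar>x1 z - x2 z\<bar> \<le> (Cdlam * k + Ctail + 1) * (Q * Kdist * c\<beta> * (q ^ k * ba))"
    using gap u_le Q_pos Kdist_ge_1 c\<beta>_pos Cdlam_nonneg Ctail_nonneg
    by (intro mult_left_mono order_trans[OF gap]) auto
  also have "\<dots> = (Cdlam * (k * q ^ k) + (Ctail + 1) * q ^ k) * (Kdist * Q * ba * c\<beta>)"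
    by (simp add: algebra_simps)
  also have "\<dots> \<le> (Cdlam * (1 / (1 - q)) + (Ctail + 1) * 1) * (Kdist * Q * ba * c\<beta>)"
    using mult_power_le_geometric[of q k] q_pos q_less_1 Cdlam_nonneg Ctail_nonneg Kdist_ge_1 Q_pos ba_pos c\<beta>_pos
    by (intro mult_right_mono add_mono mult_left_mono) (auto simp: power_le_one)
  also have "\<dots> = c\<beta> * E0" by (simp add: E0_def algebra_simps)
  finally show ?thesis using c\<beta>_E0_le by linarith
qed

lemma H_lower:
  assumes z: "z \<in> ball l0 \<epsilon>\<beta>" and small: "\<bar>D z\<bar> < c\<beta> * d powr (1 + \<beta>)"
  shows "\<eta> \<le> norm (H z)"
proof -
  have zS: "z \<in> S" using z ball_\<epsilon>\<beta>_subset by blast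
  have "\<bar>x1 z - x2 z\<bar> \<le> \<eta> / 4"
    using tail_gap_le[OF z small] mult_right_mono[of 1 "Cdlam * k + Ctail + 1" "\<bar>x1 z - x2 z\<bar>"]
      Cdlam_nonneg Ctail_nonneg by simp
  then obtain g where "((\<lambda>\<mu>. proj f a \<mu> \<omega>' - proj f a \<mu> \<tau>') has_derivative (\<lambda>h. g \<bullet> h)) (at z within S)"
      "\<eta> \<le> norm g"
    using transversal[OF zS tails_in_seqs tails_differ] \<eta> by auto
  then show ?thesis
    using transversal_proj_grad[OF _ tails_in_seqs] ball_\<epsilon>\<beta>_subset_interior z by blast
qed

lemma H_close: "z \<in> ball l0 \<epsilon>\<beta> \<Longrightarrow> z' \<in> ball l0 \<epsilon>\<beta> \<Longrightarrow> norm (H z - H z') \<le> \<eta> / 4"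
  using proj_grad_close[OF tails_in_seqs(1), of z z'] proj_grad_close[OF tails_in_seqs(2), of z z']
    norm_triangle_ineq4[of "proj_grad z \<omega>' - proj_grad z' \<omega>'" "proj_grad z \<tau>' - proj_grad z' \<tau>'"]
  by (simp add: algebra_simps)

lemma proj_grad_diff_error_le:
  assumes LS: "L \<in> S" and e: "norm e = 1"
  shows "\<bar>(dlam_fcomp w L (x1 L) - dlam_fcomp w L (x2 L)) \<bullet> e\<bar>
      + \<bar>(dx_fcomp w L (x1 L) - dx_fcomp w L (x2 L)) * (proj_grad L \<tau>' \<bullet> e)\<bar>
    \<le> (Cdlam * k + Ctail) * \<bar>dx_fcomp w L (x1 L)\<bar> * \<bar>x1 L - x2 L\<bar>"
proof -
  note X = tails_in_X[OF LS]
  define B where "B = \<bar>dx_fcomp w L (x1 L)\<bar>"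
  define \<Delta> where "\<Delta> = \<bar>x1 L - x2 L\<bar>"
  have B\<Delta>: "0 \<le> B * \<Delta>" by (simp add: B_def \<Delta>_def)
  have ie: "\<bar>v \<bullet> e\<bar> \<le> norm v" for v using Cauchy_Schwarz_ineq2[of v e] e by simp
  have t1: "\<bar>(dlam_fcomp w L (x1 L) - dlam_fcomp w L (x2 L)) \<bullet> e\<bar> \<le> Cdlam * k * B * \<Delta>"
    using dlam_fcomp_lipschitz[OF w_letters LS X(2,1)] ie[of "dlam_fcomp w L (x1 L) - dlam_fcomp w L (x2 L)"]
    by (simp add: B_def \<Delta>_def norm_minus_commute abs_minus_commute)
  have "\<bar>dx_fcomp w L (x1 L) - dx_fcomp w L (x2 L)\<bar> \<le> Kfx * Kdist * geom_sum k * (B * \<Delta>)"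
    using dx_fcomp_lipschitz[OF w_letters LS X(2,1)] by (simp add: B_def \<Delta>_def abs_minus_commute mult.assoc)
  also have "\<dots> \<le> Kfx * Kdist * (1 / (1 - \<gamma>2)) * (B * \<Delta>)"
    using geom_sum_le[of k] Kfx_pos Kdist_ge_1 B\<Delta> by (intro mult_right_mono mult_left_mono) auto
  finally have "\<bar>dx_fcomp w L (x1 L) - dx_fcomp w L (x2 L)\<bar> \<le> Kfx * Kdist * (1 / (1 - \<gamma>2)) * (B * \<Delta>)" .
  moreover have "\<bar>proj_grad L \<tau>' \<bullet> e\<bar> \<le> Lproj"
    using ie[of "proj_grad L \<tau>'"] norm_proj_grad_le[OF tails_in_seqs(2) LS] by linarith
  ultimately have "\<bar>(dx_fcomp w L (x1 L) - dx_fcomp w L (x2 L)) * (proj_grad L \<tau>' \<bullet> e)\<bar>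
      \<le> (Kfx * Kdist * (1 / (1 - \<gamma>2)) * (B * \<Delta>)) * Lproj"
    unfolding abs_mult by (intro mult_mono) auto
  then have t2: "\<bar>(dx_fcomp w L (x1 L) - dx_fcomp w L (x2 L)) * (proj_grad L \<tau>' \<bullet> e)\<bar> \<le> Ctail * B * \<Delta>"
    by (simp add: Ctail_def mult.commute mult.left_commute)
  from t1 t2 show ?thesis by (simp add: B_def \<Delta>_def algebra_simps)
qed

lemma proj_grad_diff_lower:
  assumes L: "L \<in> ball l0 \<epsilon>\<beta>" and small: "\<bar>D L\<bar> < c\<beta> * d powr (1 + \<beta>)"
    and e: "norm e = 1" and He: "3 * \<eta> / 4 \<le> H L \<bullet> e"
  shows "c\<beta> * d powr (1 + \<beta>) \<le> \<bar>(proj_grad L \<omega> - proj_grad L \<tau>) \<bullet> e\<bar>"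
proof -
  have LS: "L \<in> S" using L ball_\<epsilon>\<beta>_subset by blast
  define B where "B = \<bar>dx_fcomp w L (x1 L)\<bar>"
  have B0: "0 \<le> B" by (simp add: B_def)
  have errors: "(Cdlam * k + Ctail) * B * \<bar>x1 L - x2 L\<bar> \<le> B * \<eta> / 4"
  proof -
    have "(Cdlam * k + Ctail) * \<bar>x1 L - x2 L\<bar> \<le> \<eta> / 4"
      using tail_gap_le[OF L small] mult_right_mono[of "Cdlam * k + Ctail" "Cdlam * k + Ctail + 1" "\<bar>x1 L - x2 L\<bar>"]
      by simp
    then have "B * ((Cdlam * k + Ctail) * \<bar>x1 L - x2 L\<bar>) \<le> B * (\<eta> / 4)" using B0 by (intro mult_left_mono)
    then show ?thesis by (simp add: algebra_simps)
  qed
  have main: "3 * (B * \<eta>) / 4 \<le> \<bar>dx_fcomp w L (x1 L) * (H L \<bullet> e)\<bar>"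
    using mult_left_mono[OF He B0] He \<eta> by (simp add: B_def abs_mult)
  have split: "(proj_grad L \<omega> - proj_grad L \<tau>) \<bullet> e = (dlam_fcomp w L (x1 L) - dlam_fcomp w L (x2 L)) \<bullet> e
      + dx_fcomp w L (x1 L) * (H L \<bullet> e) + (dx_fcomp w L (x1 L) - dx_fcomp w L (x2 L)) * (proj_grad L \<tau>' \<bullet> e)"
    unfolding proj_grad_diff_eq[OF LS] by (simp add: inner_add_left)
  have tri: "\<bar>y\<bar> - \<bar>x\<bar> - \<bar>z\<bar> \<le> \<bar>x + y + z\<bar>" for x y z :: real by arith
  have lower: "B * \<eta> / 2 \<le> \<bar>(proj_grad L \<omega> - proj_grad L \<tau>) \<bullet> e\<bar>"
    unfolding split using proj_grad_diff_error_le[OF LS e, folded B_def] errors main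
      tri[where x = "(dlam_fcomp w L (x1 L) - dlam_fcomp w L (x2 L)) \<bullet> e"
        and y = "dx_fcomp w L (x1 L) * (H L \<bullet> e)"
        and z = "(dx_fcomp w L (x1 L) - dx_fcomp w L (x2 L)) * (proj_grad L \<tau>' \<bullet> e)"]
    by linarith
  have "c\<beta> * d powr (1 + \<beta>) = (d * u) * (c\<beta> * u)" by (simp add: d_powr algebra_simps)
  also have "\<dots> \<le> (Q * B) * (\<eta> / (2 * Q))"
  proof (rule mult_mono)
    show "d * u \<le> Q * B" using d_mult_u_le[OF L tails_in_X(1)[OF LS]] by (simp add: B_def)
    show "c\<beta> * u \<le> \<eta> / (2 * Q)"
      using c\<beta>_ba_le u_le_ba c\<beta>_pos mult_left_mono[of u ba c\<beta>] by linarith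
  qed (use Q_pos B0 c\<beta>_pos d_nonneg in \<open>auto simp: u_def\<close>)
  also have "\<dots> = B * \<eta> / 2" using Q_pos by (simp add: field_simps)
  finally show ?thesis using lower by linarith
qed

theorem direction_exists:
  "\<exists>e. norm e = 1 \<and>
    (\<forall>p t. p \<in> ball 0 \<epsilon>\<beta> \<and> p \<bullet> e = 0 \<and> p + t *\<^sub>R e \<in> ball 0 \<epsilon>\<beta> \<longrightarrow>
       \<bar>D (l0 + p + t *\<^sub>R e)\<bar> < c\<beta> * d powr (1 + \<beta>) \<longrightarrow>
       (\<exists>g. ((\<lambda>s. D (l0 + p + s *\<^sub>R e)) has_real_derivative g) (at t) \<and> c\<beta> * d powr (1 + \<beta>) \<le> \<bar>g\<bar>))"
proof (cases "\<exists>z\<in>ball l0 \<epsilon>\<beta>. \<bar>D z\<bar> < c\<beta> * d powr (1 + \<beta>)")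
  case False
  obtain e0 :: 'a where e0: "norm e0 = 1" using norm_Basis nonempty_Basis by blast
  have "\<not> \<bar>D (l0 + p + t *\<^sub>R e0)\<bar> < c\<beta> * d powr (1 + \<beta>)" if "p + t *\<^sub>R e0 \<in> ball 0 \<epsilon>\<beta>" for p t
    using False that by (simp add: dist_norm add.assoc)
  then show ?thesis using e0 by (intro exI[of _ e0]) blast
next
  case True
  then obtain zs where zs: "zs \<in> ball l0 \<epsilon>\<beta>" "\<bar>D zs\<bar> < c\<beta> * d powr (1 + \<beta>)" by blast
  have Hpos: "0 < norm (H zs)" using H_lower[OF zs] \<eta> by linarith
  define e where "e = H zs /\<^sub>R norm (H zs)"
  have e: "norm e = 1" using Hpos by (simp add: e_def)
  have He: "3 * \<eta> / 4 \<le> H z \<bullet> e" if z: "z \<in> ball l0 \<epsilon>\<beta>" for z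
  proof -
    have "H zs \<bullet> e = norm (H zs)"
      using Hpos by (simp add: e_def inner_scaleR_right dot_square_norm power2_eq_square)
    moreover have "\<bar>(H z - H zs) \<bullet> e\<bar> \<le> \<eta> / 4"
      using Cauchy_Schwarz_ineq2[of "H z - H zs" e] e H_close[OF z zs(1)] by simp
    moreover have "H z \<bullet> e = H zs \<bullet> e + (H z - H zs) \<bullet> e" by (simp add: inner_diff_left)
    ultimately show ?thesis using H_lower[OF zs] by linarith
  qed
  show ?thesis
  proof (intro exI[of _ e] conjI e allI impI)
    fix p t assume pt: "p \<in> ball 0 \<epsilon>\<beta> \<and> p \<bullet> e = 0 \<and> p + t *\<^sub>R e \<in> ball 0 \<epsilon>\<beta>"
      and small: "\<bar>D (l0 + p + t *\<^sub>R e)\<bar> < c\<beta> * d powr (1 + \<beta>)"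
    have L: "l0 + p + t *\<^sub>R e \<in> ball l0 \<epsilon>\<beta>" using pt by (simp add: dist_norm add.assoc)
    then have "l0 + p + t *\<^sub>R e \<in> interior S" using ball_\<epsilon>\<beta>_subset_interior by blast
    then show "\<exists>g. ((\<lambda>s. D (l0 + p + s *\<^sub>R e)) has_real_derivative g) (at t) \<and> c\<beta> * d powr (1 + \<beta>) \<le> \<bar>g\<bar>"
      using proj_diff_has_real_derivative_line[OF \<omega> \<tau>, of "l0 + p" t e]
        proj_grad_diff_lower[OF L small e He[OF L]] by (auto simp: add.assoc)
  qed
qed

end

context ifs_transversal
begin

theorem transversality_along_lines:
  assumes \<omega>: "\<omega> \<in> seqs m" and \<tau>: "\<tau> \<in> seqs m"
  shows "\<exists>e. norm e = 1 \<and>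
    (\<forall>p t. p \<in> ball 0 \<epsilon>\<beta> \<and> p \<bullet> e = 0 \<and> p + t *\<^sub>R e \<in> ball 0 \<epsilon>\<beta> \<longrightarrow>
       \<bar>proj f a (l0 + p + t *\<^sub>R e) \<omega> - proj f a (l0 + p + t *\<^sub>R e) \<tau>\<bar>
          < c\<beta> * dsym f {a..b} l0 \<omega> \<tau> powr (1 + \<beta>) \<longrightarrow>
       (\<exists>g. ((\<lambda>s. proj f a (l0 + p + s *\<^sub>R e) \<omega> - proj f a (l0 + p + s *\<^sub>R e) \<tau>)
                has_real_derivative g) (at t)
            \<and> c\<beta> * dsym f {a..b} l0 \<omega> \<tau> powr (1 + \<beta>) \<le> \<bar>g\<bar>))"
proof (cases "\<omega> = \<tau>")
  case True
  obtain e0 :: 'a where "norm e0 = 1" using norm_Basis nonempty_Basis by blast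
  then show ?thesis using True by (intro exI[of _ e0]) (simp add: dsym_def)
next
  case False
  interpret ifs_pair f m a b \<delta> S fx fxx fl flx M \<gamma>1 \<gamma>2 l0 r \<eta> \<beta> \<omega> \<tau>
    by (intro ifs_pair.intro ifs_transversal.intro ifs_axioms ifs_transversal_axioms ifs_pair_axioms.intro
        \<omega> \<tau> False)
  show ?thesis using direction_exists unfolding d_def .
qed

end

lemma ifs_of_MA:
  fixes f :: "nat \<Rightarrow> 'a::euclidean_space \<Rightarrow> real \<Rightarrow> real"
  assumes MA: "MA f m {a..b} U \<delta>" and "a < b" "0 < \<delta>" "\<delta> \<le> 1"
    and S: "S \<subseteq> closure U" "convex S" "\<And>l \<mu>. l \<in> S \<Longrightarrow> \<mu> \<in> S \<Longrightarrow> norm (l - \<mu>) \<le> 1"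
  shows "\<exists>fx fxx fl flx M \<gamma>1 \<gamma>2. ifs f m a b \<delta> S fx fxx fl flx M \<gamma>1 \<gamma>2"
proof -
  obtain fx fxx fl flx M \<gamma>1 \<gamma>2 where
    \<gamma>: "0 < \<gamma>1" "\<gamma>1 \<le> \<gamma>2" "\<gamma>2 < 1" and
    maps: "\<forall>j\<in>{1..m}. \<forall>l\<in>closure U. f j l ` {a..b} \<subseteq> {a..b} \<and>
          (\<forall>x\<in>{a..b}.
             (f j l has_real_derivative fx j l x) (at x within {a..b}) \<and>
             (fx j l has_real_derivative fxx j l x) (at x within {a..b}) \<and>
             ((\<lambda>\<mu>. f j \<mu> x) has_derivative (\<lambda>h. fl j l x \<bullet> h)) (at l within closure U) \<and>
             ((\<lambda>y. fl j l y) has_vector_derivative flx j l x) (at x within {a..b}) \<and>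
             ((\<lambda>\<mu>. fx j \<mu> x) has_derivative (\<lambda>h. flx j l x \<bullet> h)) (at l within closure U) \<and>
             \<gamma>1 \<le> \<bar>fx j l x\<bar> \<and> \<bar>fx j l x\<bar> \<le> \<gamma>2 \<and>
             \<bar>fxx j l x\<bar> \<le> M \<and> norm (fl j l x) \<le> M \<and> norm (flx j l x) \<le> M)" and
    hoelder: "\<forall>j\<in>{1..m}. \<forall>l\<in>closure U. \<forall>\<mu>\<in>closure U. \<forall>x\<in>{a..b}. \<forall>y\<in>{a..b}.
          \<bar>fx j l x - fx j l y\<bar> \<le> M * \<bar>x - y\<bar> powr \<delta> \<and>
          \<bar>fx j l x - fx j \<mu> x\<bar> \<le> M * norm (l - \<mu>) powr \<delta> \<and>
          \<bar>fxx j l x - fxx j l y\<bar> \<le> M * \<bar>x - y\<bar> powr \<delta> \<and>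
          \<bar>fxx j l x - fxx j \<mu> x\<bar> \<le> M * norm (l - \<mu>) powr \<delta> \<and>
          norm (fl j l x - fl j l y) \<le> M * \<bar>x - y\<bar> powr \<delta> \<and>
          norm (fl j l x - fl j \<mu> x) \<le> M * norm (l - \<mu>) powr \<delta> \<and>
          norm (flx j l x - flx j l y) \<le> M * \<bar>x - y\<bar> powr \<delta> \<and>
          norm (flx j l x - flx j \<mu> x) \<le> M * norm (l - \<mu>) powr \<delta>"
    using MA unfolding MA_def by (elim exE conjE) (rule that, assumption+)
  \<comment> \<open>the locale wants a positive bound\<close>
  define M' where "M' = max M 1"
  have "ifs f m a b \<delta> S fx fxx fl flx M' \<gamma>1 \<gamma>2"
  proof
    fix j l x assume j: "j \<in> {1..m}" and l: "l \<in> S" and x: "x \<in> {a..b}"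
    have lU: "l \<in> closure U" using l S by auto
    have P: "f j l x \<in> {a..b} \<and> (f j l has_real_derivative fx j l x) (at x within {a..b}) \<and>
             (fx j l has_real_derivative fxx j l x) (at x within {a..b}) \<and>
             ((\<lambda>\<mu>. f j \<mu> x) has_derivative (\<lambda>h. fl j l x \<bullet> h)) (at l within closure U) \<and>
             ((\<lambda>y. fl j l y) has_vector_derivative flx j l x) (at x within {a..b}) \<and>
             \<gamma>1 \<le> \<bar>fx j l x\<bar> \<and> \<bar>fx j l x\<bar> \<le> \<gamma>2 \<and>
             \<bar>fxx j l x\<bar> \<le> M \<and> norm (fl j l x) \<le> M \<and> norm (flx j l x) \<le> M"
      using maps[rule_format, OF j lU] x by blast
    then show "f j l x \<in> {a..b}" "(f j l has_real_derivative fx j l x) (at x within {a..b})"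
      "(fx j l has_real_derivative fxx j l x) (at x within {a..b})"
      "((\<lambda>y. fl j l y) has_vector_derivative flx j l x) (at x within {a..b})"
      "\<gamma>1 \<le> \<bar>fx j l x\<bar> \<and> \<bar>fx j l x\<bar> \<le> \<gamma>2"
      "\<bar>fxx j l x\<bar> \<le> M' \<and> norm (fl j l x) \<le> M' \<and> norm (flx j l x) \<le> M'"
      by (auto simp: M'_def)
    show "((\<lambda>\<mu>. f j \<mu> x) has_derivative (\<lambda>h. fl j l x \<bullet> h)) (at l within S)"
      using P has_derivative_subset S(1) by blast
  next
    fix j l \<mu> x assume j: "j \<in> {1..m}" and "l \<in> S" "\<mu> \<in> S" and x: "x \<in> {a..b}"
    then have "l \<in> closure U" "\<mu> \<in> closure U" using S by auto
    then have "\<bar>fx j l x - fx j \<mu> x\<bar> \<le> M * norm (l - \<mu>) powr \<delta>"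
      "norm (fl j l x - fl j \<mu> x) \<le> M * norm (l - \<mu>) powr \<delta>"
      using hoelder[rule_format, OF j _ _ x x] by blast+
    moreover have "M * norm (l - \<mu>) powr \<delta> \<le> M' * norm (l - \<mu>) powr \<delta>"
      by (intro mult_right_mono) (auto simp: M'_def)
    ultimately show "\<bar>fx j l x - fx j \<mu> x\<bar> \<le> M' * norm (l - \<mu>) powr \<delta>"
      "norm (fl j l x - fl j \<mu> x) \<le> M' * norm (l - \<mu>) powr \<delta>" by linarith+
  qed (use assms \<gamma> in \<open>auto simp: M'_def\<close>)
  then show ?thesis by blast
qed

lemma ifs_transversal_of_MT:
  assumes ifs: "ifs f m a b \<delta> S fx fxx fl flx M \<gamma>1 \<gamma>2" and MT: "MT f m a U" and SU: "S \<subseteq> closure U"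
    and "0 < r" "ball l0 r \<subseteq> S" "0 < \<beta>"
  shows "\<exists>\<eta>. ifs_transversal f m a b \<delta> S fx fxx fl flx M \<gamma>1 \<gamma>2 l0 r \<eta> \<beta>"
proof -
  from MT obtain \<eta> where "0 < \<eta>" and \<eta>: "\<forall>l\<in>closure U. \<forall>\<omega>\<in>seqs m. \<forall>\<tau>\<in>seqs m.
       \<omega> 0 \<noteq> \<tau> 0 \<and> \<bar>proj f a l \<omega> - proj f a l \<tau>\<bar> < \<eta> \<longrightarrow>
       (\<exists>g. ((\<lambda>\<mu>. proj f a \<mu> \<omega> - proj f a \<mu> \<tau>) has_derivative (\<lambda>h. g \<bullet> h)) (at l within closure U)
            \<and> \<eta> \<le> norm g)"
    unfolding MT_def by blast
  have "ifs_transversal f m a b \<delta> S fx fxx fl flx M \<gamma>1 \<gamma>2 l0 r \<eta> \<beta>"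
  proof (intro ifs_transversal.intro[OF ifs] ifs_transversal_axioms.intro)
    fix l \<omega> \<tau> assume "l \<in> S" "\<omega> \<in> seqs m" "\<tau> \<in> seqs m" "\<omega> 0 \<noteq> \<tau> 0"
      "\<bar>proj f a l \<omega> - proj f a l \<tau>\<bar> < \<eta>"
    then obtain g where "((\<lambda>\<mu>. proj f a \<mu> \<omega> - proj f a \<mu> \<tau>) has_derivative (\<lambda>h. g \<bullet> h)) (at l within closure U)"
        "\<eta> \<le> norm g"
      using \<eta> SU by blast
    then show "\<exists>g. ((\<lambda>\<mu>. proj f a \<mu> \<omega> - proj f a \<mu> \<tau>) has_derivative (\<lambda>h. g \<bullet> h)) (at l within S)
        \<and> \<eta> \<le> norm g"
      using has_derivative_subset[OF _ SU] by blast
  qed (use assms \<open>0 < \<eta>\<close> in auto)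
  then show ?thesis ..
qed

theorem mainTheorem12:
  fixes f :: "nat \<Rightarrow> 'a::euclidean_space \<Rightarrow> real \<Rightarrow> real"
    and m :: nat and a b \<delta> \<beta> :: real and U :: "'a set" and l0 :: 'a
  assumes "a < b" and "bounded U" and "open U"
    and "0 < \<delta>" and "\<delta> < 1"
    and "MA f m {a..b} U \<delta>" and "MT f m a U"
    and "l0 \<in> U" and "0 < \<beta>"
  shows "\<exists>c>0. \<exists>\<epsilon>0>0. ball l0 \<epsilon>0 \<subseteq> U \<and>
    (\<forall>\<omega>\<in>seqs m. \<forall>\<tau>\<in>seqs m. \<exists>e. norm e = 1 \<and>
      (\<forall>p t. p \<in> ball 0 \<epsilon>0 \<and> p \<bullet> e = 0 \<and> p + t *\<^sub>R e \<in> ball 0 \<epsilon>0 \<longrightarrow>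
         \<bar>proj f a (l0 + p + t *\<^sub>R e) \<omega> - proj f a (l0 + p + t *\<^sub>R e) \<tau>\<bar>
            < c * dsym f {a..b} l0 \<omega> \<tau> powr (1 + \<beta>) \<longrightarrow>
         (\<exists>g. ((\<lambda>s. proj f a (l0 + p + s *\<^sub>R e) \<omega> - proj f a (l0 + p + s *\<^sub>R e) \<tau>)
                  has_real_derivative g) (at t)
              \<and> c * dsym f {a..b} l0 \<omega> \<tau> powr (1 + \<beta>) \<le> \<bar>g\<bar>)))"
proof -
  obtain r0 where r0: "0 < r0" "ball l0 r0 \<subseteq> U" using assms(3,8) open_contains_ball by blast
  define r where "r = min r0 (1/2)"
  have r: "0 < r" "ball l0 r \<subseteq> U" using r0 by (auto simp: r_def)
  have diam: "norm (l - \<mu>) \<le> 1" if "l \<in> ball l0 r" "\<mu> \<in> ball l0 r" for l \<mu>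
    using that dist_triangle[of l \<mu> l0] by (auto simp: r_def dist_norm norm_minus_commute)
  have SU: "ball l0 r \<subseteq> closure U" using r closure_subset by blast
  have "\<delta> \<le> 1" using assms(5) by simp
  then obtain fx fxx fl flx M \<gamma>1 \<gamma>2 where "ifs f m a b \<delta> (ball l0 r) fx fxx fl flx M \<gamma>1 \<gamma>2"
    using ifs_of_MA[OF assms(6,1,4) _ SU convex_ball diam] by blast
  then obtain \<eta> where "ifs_transversal f m a b \<delta> (ball l0 r) fx fxx fl flx M \<gamma>1 \<gamma>2 l0 r \<eta> \<beta>"
    using ifs_transversal_of_MT[OF _ assms(7) SU r(1) subset_refl assms(9)] by blast
  then interpret T: ifs_transversal f m a b \<delta> "ball l0 r" fx fxx fl flx M \<gamma>1 \<gamma>2 l0 r \<eta> \<beta> .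
  have "ball l0 T.\<epsilon>\<beta> \<subseteq> U" using T.ball_\<epsilon>\<beta>_subset_ball r(2) by blast
  then show ?thesis using T.c\<beta>_pos T.\<epsilon>\<beta>_pos T.transversality_along_lines by blast
qed

end
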